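(* Let $H$, $\sigma(H)$, $\Sigma$, $\mathcal D$ and $\rho$ be as below. Then (a) for each $d\in\mathcal D$ there is a unique arrow $\alpha_d\in a(H)$ with $s(\alpha_d)=d$, and $t(\alpha_d)=\rho(d)$; (b) if $d\in\mathcal D$ and $\beta\in a(H)$ satisfies $s(\beta)=\rho(d)$, then $\beta\alpha_d\in\langle\sigma(H)\rangle$.
   Context: $k$ is a field. For a finite quiver $H$ with vertex set $v(H)$ and arrow set $a(H)$, $s(p),t(p)$ denote start and terminal vertices of a path $p$, $e_x$ the trivial path at $x$, and $kH$ the path algebra, where $\beta\alpha$ denotes the path "first $\alpha$, then $\beta$". Standing setting: $H$ is a finite quiver and $\sigma(H)\subset kH$ a set of relations such that $\langle a(H)\rangle^m\subseteq\langle\sigma(H)\rangle\subseteq\langle a(H)\rangle^2$ for some $m\ge1$ (where $\langle X\rangle$ is the two-sided ideal generated by $X$); $\Sigma=kH/\langle\sigma(H)\rangle$ is finite-dimensional and satisfies condition (F): the radical of each indecomposable finitely generated projective left $\Sigma$-module is projective or simple. For $z\in v(H)$, $\hat e_z$ is the image of $e_z$, $P_z=\Sigma\hat e_z$ and $S_z$ the associated simple module. Set $\mathcal D=\{d\in v(H): \ell(P_d)=2$ and $\operatorname{Soc}P_d$ is not projective$\}$ and define $\rho:\mathcal D\to v(H)$ by $\rho(d)=y$ where $S_y\cong\operatorname{Soc}P_d$. *)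

theory Defs
  imports Main
begin

record ('v,'e) quiver =
  verts :: "'v set"
  arrs  :: "'e set"
  src   :: "'e \<Rightarrow> 'v"
  tgt   :: "'e \<Rightarrow> 'v"

text \<open>A path is a start vertex together with the list of its arrows in order of traversal;
  the trivial path e_x is (x, []).\<close>
type_synonym ('v,'e) path = "'v \<times> 'e list"
text \<open>Elements of kH: k-valued functions on paths (finitely supported, on valid paths).\<close>
type_synonym ('v,'e,'k) elem = "('v,'e) path \<Rightarrow> 'k"

definition path_end :: "('v,'e) quiver \<Rightarrow> ('v,'e) path \<Rightarrow> 'v" where
  "path_end Q p = (if snd p = [] then fst p else tgt Q (last (snd p)))"

definition valid_path :: "('v,'e) quiver \<Rightarrow> ('v,'e) path \<Rightarrow> bool" where
  "valid_path Q p \<longleftrightarrow> fst p \<in> verts Q \<and> set (snd p) \<subseteq> arrs Q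
     \<and> (snd p \<noteq> [] \<longrightarrow> src Q (hd (snd p)) = fst p)
     \<and> (\<forall>i. Suc i < length (snd p) \<longrightarrow> tgt Q (snd p ! i) = src Q (snd p ! Suc i))"

definition kH :: "('v,'e) quiver \<Rightarrow> ('v,'e,'k::field) elem set" where
  "kH Q = {f. finite {p. f p \<noteq> 0} \<and> (\<forall>p. f p \<noteq> 0 \<longrightarrow> valid_path Q p)}"

definition pbasis :: "('v,'e) path \<Rightarrow> ('v,'e,'k::field) elem" where
  "pbasis p = (\<lambda>q. if q = p then 1 else 0)"

definition arr :: "('v,'e) quiver \<Rightarrow> 'e \<Rightarrow> ('v,'e,'k::field) elem" where
  "arr Q a = pbasis (src Q a, [a])"

definition pzero :: "('v,'e,'k::field) elem" where
  "pzero = (\<lambda>p. 0)"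

definition padd :: "('v,'e,'k::field) elem \<Rightarrow> ('v,'e,'k) elem \<Rightarrow> ('v,'e,'k) elem" where
  "padd f g = (\<lambda>p. f p + g p)"

definition psub :: "('v,'e,'k::field) elem \<Rightarrow> ('v,'e,'k) elem \<Rightarrow> ('v,'e,'k) elem" where
  "psub f g = (\<lambda>p. f p - g p)"

text \<open>Multiplication of kH: pmult Q f g is "f g", i.e. first (a path of) g, then f
  (so that the product of arrows beta, alpha is the path "first alpha, then beta").
  A path r = (x, as) decomposes as "first (x, take i as), then (end, drop i as)".\<close>
definition pmult :: "('v,'e) quiver \<Rightarrow> ('v,'e,'k::field) elem \<Rightarrow> ('v,'e,'k) elem \<Rightarrow> ('v,'e,'k) elem" where
  "pmult Q f g = (\<lambda>r. if valid_path Q r then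
      (\<Sum>i\<in>{0..length (snd r)}.
          f (path_end Q (fst r, take i (snd r)), drop i (snd r)) * g (fst r, take i (snd r)))
      else 0)"

inductive_set ideal_gen :: "('v,'e) quiver \<Rightarrow> ('v,'e,'k::field) elem set \<Rightarrow> ('v,'e,'k) elem set"
  for Q :: "('v,'e) quiver" and X :: "('v,'e,'k) elem set" where
  gen: "x \<in> X \<Longrightarrow> x \<in> ideal_gen Q X"
| zero: "pzero \<in> ideal_gen Q X"
| add: "a \<in> ideal_gen Q X \<Longrightarrow> b \<in> ideal_gen Q X \<Longrightarrow> padd a b \<in> ideal_gen Q X"
| mult: "a \<in> ideal_gen Q X \<Longrightarrow> u \<in> kH Q \<Longrightarrow> w \<in> kH Q \<Longrightarrow>
           pmult Q u (pmult Q a w) \<in> ideal_gen Q X"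

definition arrow_ideal :: "('v,'e) quiver \<Rightarrow> ('v,'e,'k::field) elem set" where
  "arrow_ideal Q = ideal_gen Q {arr Q a | a. a \<in> arrs Q}"

primrec ideal_pow :: "('v,'e) quiver \<Rightarrow> ('v,'e,'k::field) elem set \<Rightarrow> nat \<Rightarrow> ('v,'e,'k) elem set" where
  "ideal_pow Q J 0 = kH Q"
| "ideal_pow Q J (Suc n) = ideal_gen Q {pmult Q x y | x y. x \<in> ideal_pow Q J n \<and> y \<in> J}"

definition fin_dim_quot :: "('v,'e) quiver \<Rightarrow> ('v,'e,'k::field) elem set \<Rightarrow> bool" where
  "fin_dim_quot Q I \<longleftrightarrow> (\<exists>B. finite B \<and> B \<subseteq> kH Q \<and>
      (\<forall>f\<in>kH Q. \<exists>c. psub f (\<lambda>p. \<Sum>b\<in>B. c b * b p) \<in> I))"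

text \<open>Modules are represented as subquotients L / L0 of the left kH-module kH^N
  (vectors indexed by nat), with I acting trivially on L / L0. Every finitely generated
  Sigma-module is (isomorphic to) such a subquotient, namely a quotient of Sigma^n.\<close>
type_synonym ('v,'e,'k) vec = "nat \<Rightarrow> ('v,'e,'k) elem"
type_synonym ('v,'e,'k) smodule = "('v,'e,'k) vec set \<times> ('v,'e,'k) vec set"

definition vzero :: "('v,'e,'k::field) vec" where
  "vzero = (\<lambda>i. pzero)"

definition vadd :: "('v,'e,'k::field) vec \<Rightarrow> ('v,'e,'k) vec \<Rightarrow> ('v,'e,'k) vec" where
  "vadd v w = (\<lambda>i. padd (v i) (w i))"

definition vsub :: "('v,'e,'k::field) vec \<Rightarrow> ('v,'e,'k) vec \<Rightarrow> ('v,'e,'k) vec" where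
  "vsub v w = (\<lambda>i. psub (v i) (w i))"

definition vact :: "('v,'e) quiver \<Rightarrow> ('v,'e,'k::field) elem \<Rightarrow> ('v,'e,'k) vec \<Rightarrow> ('v,'e,'k) vec" where
  "vact Q u v = (\<lambda>i. pmult Q u (v i))"

definition submod :: "('v,'e) quiver \<Rightarrow> ('v,'e,'k::field) vec set \<Rightarrow> bool" where
  "submod Q N \<longleftrightarrow> (\<forall>v\<in>N. \<forall>i. v i \<in> kH Q) \<and> vzero \<in> N
      \<and> (\<forall>v\<in>N. \<forall>w\<in>N. vadd v w \<in> N) \<and> (\<forall>u\<in>kH Q. \<forall>v\<in>N. vact Q u v \<in> N)"

definition smod :: "('v,'e) quiver \<Rightarrow> ('v,'e,'k::field) elem set \<Rightarrow> ('v,'e,'k) smodule \<Rightarrow> bool" where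
  "smod Q I M \<longleftrightarrow> submod Q (fst M) \<and> submod Q (snd M) \<and> snd M \<subseteq> fst M
      \<and> (\<forall>u\<in>I. \<forall>v\<in>fst M. vact Q u v \<in> snd M)"

text \<open>Submodules of L/L0 correspond to submodules N with L0 \<subseteq> N \<subseteq> L.\<close>
definition submods :: "('v,'e) quiver \<Rightarrow> ('v,'e,'k::field) smodule \<Rightarrow> ('v,'e,'k) vec set set" where
  "submods Q M = {N. submod Q N \<and> snd M \<subseteq> N \<and> N \<subseteq> fst M}"

definition simple_mod :: "('v,'e) quiver \<Rightarrow> ('v,'e,'k::field) smodule \<Rightarrow> bool" where
  "simple_mod Q M \<longleftrightarrow> fst M \<noteq> snd M \<and> (\<forall>N\<in>submods Q M. N = snd M \<or> N = fst M)"

definition has_chain :: "('v,'e) quiver \<Rightarrow> ('v,'e,'k::field) smodule \<Rightarrow> nat \<Rightarrow> bool" where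
  "has_chain Q M n \<longleftrightarrow> (\<exists>c. c 0 = snd M \<and> c n = fst M \<and> (\<forall>i\<le>n. c i \<in> submods Q M)
      \<and> (\<forall>i<n. c i \<subset> c (Suc i)))"

definition mod_length :: "('v,'e) quiver \<Rightarrow> ('v,'e,'k::field) smodule \<Rightarrow> nat" where
  "mod_length Q M = (GREATEST n. has_chain Q M n)"

definition maximal_sub :: "('v,'e) quiver \<Rightarrow> ('v,'e,'k::field) smodule \<Rightarrow> ('v,'e,'k) vec set \<Rightarrow> bool" where
  "maximal_sub Q M N \<longleftrightarrow> N \<in> submods Q M \<and> N \<noteq> fst M
      \<and> (\<forall>N'\<in>submods Q M. N \<subseteq> N' \<longrightarrow> N' = N \<or> N' = fst M)"

definition rad :: "('v,'e) quiver \<Rightarrow> ('v,'e,'k::field) smodule \<Rightarrow> ('v,'e,'k) smodule" where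
  "rad Q M = (fst M \<inter> \<Inter>{N. maximal_sub Q M N}, snd M)"

definition soc :: "('v,'e) quiver \<Rightarrow> ('v,'e,'k::field) smodule \<Rightarrow> ('v,'e,'k) smodule" where
  "soc Q M = (\<Inter>{S. S \<in> submods Q M \<and>
                 (\<forall>N\<in>submods Q M. simple_mod Q (N, snd M) \<longrightarrow> N \<subseteq> S)}, snd M)"

text \<open>Isomorphism of the modules L/L0 and M/M0 (phi is a lift of the isomorphism to L).\<close>
definition mod_iso :: "('v,'e) quiver \<Rightarrow> ('v,'e,'k::field) smodule \<Rightarrow> ('v,'e,'k) smodule \<Rightarrow> bool" where
  "mod_iso Q A B \<longleftrightarrow> (\<exists>\<phi>. (\<forall>x\<in>fst A. \<phi> x \<in> fst B)
      \<and> (\<forall>x\<in>fst A. \<forall>y\<in>fst A. vsub (\<phi> (vadd x y)) (vadd (\<phi> x) (\<phi> y)) \<in> snd B)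
      \<and> (\<forall>u\<in>kH Q. \<forall>x\<in>fst A. vsub (\<phi> (vact Q u x)) (vact Q u (\<phi> x)) \<in> snd B)
      \<and> (\<forall>x\<in>fst A. \<phi> x \<in> snd B \<longleftrightarrow> x \<in> snd A)
      \<and> (\<forall>y\<in>fst B. \<exists>x\<in>fst A. vsub y (\<phi> x) \<in> snd B))"

definition is_dsum :: "('v,'e) quiver \<Rightarrow> ('v,'e,'k::field) smodule \<Rightarrow> ('v,'e,'k) vec set \<Rightarrow> ('v,'e,'k) vec set \<Rightarrow> bool" where
  "is_dsum Q M X Y \<longleftrightarrow> X \<in> submods Q M \<and> Y \<in> submods Q M \<and> X \<inter> Y = snd M
      \<and> (\<forall>v\<in>fst M. \<exists>x\<in>X. \<exists>y\<in>Y. v = vadd x y)"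

definition free_mod :: "('v,'e) quiver \<Rightarrow> ('v,'e,'k::field) elem set \<Rightarrow> nat \<Rightarrow> ('v,'e,'k) smodule" where
  "free_mod Q I n = ({v. (\<forall>i. v i \<in> kH Q) \<and> (\<forall>i\<ge>n. v i = pzero)},
                     {v. (\<forall>i. v i \<in> I) \<and> (\<forall>i\<ge>n. v i = pzero)})"

definition projective :: "('v,'e) quiver \<Rightarrow> ('v,'e,'k::field) elem set \<Rightarrow> ('v,'e,'k) smodule \<Rightarrow> bool" where
  "projective Q I M \<longleftrightarrow> (\<exists>n X Y. is_dsum Q (free_mod Q I n) X Y
      \<and> mod_iso Q M (X, snd (free_mod Q I n)))"

definition fin_gen :: "('v,'e) quiver \<Rightarrow> ('v,'e,'k::field) smodule \<Rightarrow> bool" where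
  "fin_gen Q M \<longleftrightarrow> (\<exists>G. finite G \<and> G \<subseteq> fst M \<and>
      (\<forall>S. submod Q S \<and> snd M \<subseteq> S \<and> G \<subseteq> S \<longrightarrow> fst M \<subseteq> S))"

definition indecomposable :: "('v,'e) quiver \<Rightarrow> ('v,'e,'k::field) smodule \<Rightarrow> bool" where
  "indecomposable Q M \<longleftrightarrow> fst M \<noteq> snd M \<and>
      (\<forall>X Y. is_dsum Q M X Y \<longrightarrow> X = snd M \<or> Y = snd M)"

definition condF :: "('v,'e) quiver \<Rightarrow> ('v,'e,'k::field) elem set \<Rightarrow> bool" where
  "condF Q I \<longleftrightarrow> (\<forall>M. smod Q I M \<and> fin_gen Q M \<and> indecomposable Q M \<and> projective Q I M
      \<longrightarrow> projective Q I (rad Q M) \<or> simple_mod Q (rad Q M))"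

definition emb :: "('v,'e,'k::field) elem \<Rightarrow> ('v,'e,'k) vec" where
  "emb f = (\<lambda>i. if i = 0 then f else pzero)"

text \<open>P_z = Sigma e_z, as the submodule (kH e_z + I)/I of Sigma = kH/I.\<close>
definition Pmod :: "('v,'e) quiver \<Rightarrow> ('v,'e,'k::field) elem set \<Rightarrow> 'v \<Rightarrow> ('v,'e,'k) smodule" where
  "Pmod Q I z = ({emb (padd (pmult Q f (pbasis (z, []))) g) | f g. f \<in> kH Q \<and> g \<in> I}, emb ` I)"

definition Smod :: "('v,'e) quiver \<Rightarrow> ('v,'e,'k::field) elem set \<Rightarrow> 'v \<Rightarrow> ('v,'e,'k) smodule" where
  "Smod Q I z = (fst (Pmod Q I z), fst (rad Q (Pmod Q I z)))"

definition Dset :: "('v,'e) quiver \<Rightarrow> ('v,'e,'k::field) elem set \<Rightarrow> 'v set" where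
  "Dset Q I = {d \<in> verts Q. mod_length Q (Pmod Q I d) = 2 \<and> \<not> projective Q I (soc Q (Pmod Q I d))}"

definition rho :: "('v,'e) quiver \<Rightarrow> ('v,'e,'k::field) elem set \<Rightarrow> 'v \<Rightarrow> 'v" where
  "rho Q I d = (THE y. y \<in> verts Q \<and> mod_iso Q (Smod Q I y) (soc Q (Pmod Q I d)))"

end

theory Submission
  imports Defs "HOL-Library.Function_Algebras" "HOL.Vector_Spaces"
begin

text \<open>
  Write J for the arrow ideal and I for the ideal generated by the relations. Submodules of
  P_y correspond to left ideals T of kH with I \<subseteq> T \<subseteq> kH e_y + I. Since
  I \<subseteq> J^2, for every arrow a leaving d the left ideals
  I \<subseteq> {x. x(e_d) = x(a) = 0} \<subseteq> {x. x(e_d) = 0} \<subseteq> kH e_d + I form a chain, and it is strict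
  unless every element of kH e_d vanishing at e_d and at a lies in I. As P_d has length 2, this
  excludes a second arrow out of d and puts \<beta>\<alpha>_d into I. If no arrow left d, P_d would be simple.

  Since J^m \<subseteq> I, elements of e_y J e_y are nilpotent modulo I, so P_y is local with radical
  {x. x(e_y) = 0}; hence S_y is spanned by e_y and soc P_d by \<alpha>_d. Right multiplication by
  \<alpha>_d is an isomorphism S_(t \<alpha>_d) \<cong> soc P_d, and the idempotent e_(t \<alpha>_d) tells S_(t \<alpha>_d)
  apart from every other S_y, so \<rho>(d) = t(\<alpha>_d).
\<close>

section \<open>The path algebra\<close>

definition smul :: "'k \<Rightarrow> ('v,'e,'k::field) elem \<Rightarrow> ('v,'e,'k) elem" where
  "smul c f = (\<lambda>p. c * f p)"

definition pone :: "('v,'e) quiver \<Rightarrow> ('v,'e,'k::field) elem" where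
  "pone Q = (\<lambda>p. if snd p = [] \<and> fst p \<in> verts Q then 1 else 0)"

definition idem :: "'v \<Rightarrow> ('v,'e,'k::field) elem" where
  "idem x = pbasis (x, [])"

text \<open>supp_starts_at x h says that h lies in the left ideal kH e_x (see pmult_idem_right).\<close>
definition supp_starts_at :: "'v \<Rightarrow> ('v,'e,'k::field) elem \<Rightarrow> bool" where
  "supp_starts_at x h \<longleftrightarrow> (\<forall>r. h r \<noteq> 0 \<longrightarrow> fst r = x)"

definition supp_length_ge :: "nat \<Rightarrow> ('v,'e,'k::field) elem \<Rightarrow> bool" where
  "supp_length_ge n h \<longleftrightarrow> (\<forall>r. h r \<noteq> 0 \<longrightarrow> n \<le> length (snd r))"

lemma pzero_apply [simp]: "pzero p = 0" by (simp add: pzero_def)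
lemma padd_apply [simp]: "padd f g p = f p + g p" by (simp add: padd_def)
lemma psub_apply [simp]: "psub f g p = f p - g p" by (simp add: psub_def)
lemma smul_apply [simp]: "smul c f p = c * f p" by (simp add: smul_def)
lemma pbasis_apply: "pbasis p q = (if q = p then 1 else 0)" by (simp add: pbasis_def)

lemma padd_pzero [simp]: "padd h pzero = h" by (rule ext) simp
lemma pzero_padd [simp]: "padd pzero h = h" by (rule ext) simp
lemma smul_0 [simp]: "smul 0 f = pzero" by (rule ext) simp

lemma valid_path_Nil [simp]: "valid_path Q (x, []) \<longleftrightarrow> x \<in> verts Q"
  by (simp add: valid_path_def)

lemma valid_path_verts: "valid_path Q p \<Longrightarrow> fst p \<in> verts Q"
  by (simp add: valid_path_def)

lemma path_end_Nil [simp]: "path_end Q (x, []) = x"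
  by (simp add: path_end_def)

lemma path_end_Cons [simp]: "path_end Q (x, a # ys) = path_end Q (tgt Q a, ys)"
  by (simp add: path_end_def)

lemma pmult_nonzeroD:
  assumes "pmult Q f g r \<noteq> 0"
  shows "valid_path Q r \<and> (\<exists>i\<le>length (snd r).
           f (path_end Q (fst r, take i (snd r)), drop i (snd r)) \<noteq> 0 \<and> g (fst r, take i (snd r)) \<noteq> 0)"
proof -
  have "valid_path Q r" using assms by (auto simp: pmult_def split: if_splits)
  moreover from this assms obtain i where "i \<in> {0..length (snd r)}"
    "f (path_end Q (fst r, take i (snd r)), drop i (snd r)) * g (fst r, take i (snd r)) \<noteq> 0"
    unfolding pmult_def by (meson sum.not_neutral_contains_not_neutral)
  ultimately show ?thesis by auto
qed

lemma supp_starts_at_pmult: "supp_starts_at x g \<Longrightarrow> supp_starts_at x (pmult Q f g)"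
  unfolding supp_starts_at_def using pmult_nonzeroD by fastforce

lemma supp_starts_at_pzero: "supp_starts_at x pzero"
  by (simp add: supp_starts_at_def)

lemma supp_starts_at_padd:
  "supp_starts_at x f \<Longrightarrow> supp_starts_at x g \<Longrightarrow> supp_starts_at x (padd f g)"
  unfolding supp_starts_at_def by (metis add.right_neutral padd_apply)

lemma supp_starts_at_psub:
  "supp_starts_at x f \<Longrightarrow> supp_starts_at x g \<Longrightarrow> supp_starts_at x (psub f g)"
  unfolding supp_starts_at_def by (metis diff_0_right psub_apply)

lemma supp_starts_at_smul: "supp_starts_at x f \<Longrightarrow> supp_starts_at x (smul c f)"
  unfolding supp_starts_at_def by simp

lemma supp_starts_at_idem: "supp_starts_at x (idem x)"
  by (simp add: supp_starts_at_def idem_def pbasis_apply)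

lemma supp_starts_at_arr: "supp_starts_at (src Q a) (arr Q a)"
  by (simp add: supp_starts_at_def arr_def pbasis_apply)

lemma supp_length_ge_pmult:
  assumes "supp_length_ge a f" and "supp_length_ge b g"
  shows "supp_length_ge (a + b) (pmult Q f g)"
  unfolding supp_length_ge_def
proof (intro allI impI)
  fix r assume "pmult Q f g r \<noteq> 0"
  then obtain i where "i \<le> length (snd r)"
    "f (path_end Q (fst r, take i (snd r)), drop i (snd r)) \<noteq> 0" "g (fst r, take i (snd r)) \<noteq> 0"
    using pmult_nonzeroD by blast
  moreover have "a \<le> length (drop i (snd r))"
    using assms(1) calculation(2) unfolding supp_length_ge_def by fastforce
  moreover have "b \<le> length (take i (snd r))"
    using assms(2) calculation(3) unfolding supp_length_ge_def by fastforce
  ultimately show "a + b \<le> length (snd r)" by simp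
qed

lemma kH_valid: "f \<in> kH Q \<Longrightarrow> f p \<noteq> 0 \<Longrightarrow> valid_path Q p"
  unfolding kH_def by blast

lemma kH_finite_supp: "f \<in> kH Q \<Longrightarrow> finite {p. f p \<noteq> 0}"
  unfolding kH_def by blast

lemma kH_pointwiseI:
  assumes "f \<in> kH Q" and "g \<in> kH Q" and "\<And>p. f p = 0 \<Longrightarrow> g p = 0 \<Longrightarrow> h p = 0"
  shows "h \<in> kH Q"
proof -
  have "{p. h p \<noteq> 0} \<subseteq> {p. f p \<noteq> 0} \<union> {p. g p \<noteq> 0}" using assms(3) by blast
  then have "finite {p. h p \<noteq> 0}"
    by (rule finite_subset) (simp add: assms(1,2)[THEN kH_finite_supp])
  moreover have "valid_path Q p" if "h p \<noteq> 0" for p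
    using that assms(3)[of p] kH_valid[OF assms(1), of p] kH_valid[OF assms(2), of p] by blast
  ultimately show ?thesis unfolding kH_def by blast
qed

lemma pzero_kH [simp]: "pzero \<in> kH Q" by (simp add: kH_def)

lemma padd_kH: "f \<in> kH Q \<Longrightarrow> g \<in> kH Q \<Longrightarrow> padd f g \<in> kH Q"
  by (erule kH_pointwiseI) auto

lemma psub_kH: "f \<in> kH Q \<Longrightarrow> g \<in> kH Q \<Longrightarrow> psub f g \<in> kH Q"
  by (erule kH_pointwiseI) auto

lemma smul_kH: "f \<in> kH Q \<Longrightarrow> smul c f \<in> kH Q"
  by (erule kH_pointwiseI[OF _ pzero_kH]) auto

lemma pbasis_kH: "valid_path Q p \<Longrightarrow> pbasis p \<in> kH Q"
  unfolding kH_def pbasis_def by auto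

lemma pmult_kH:
  assumes f: "f \<in> kH Q" and g: "g \<in> kH Q"
  shows "pmult Q f g \<in> kH Q"
proof -
  let ?concat = "\<lambda>(p, q). (fst q, snd q @ snd p)"
  have "{r. pmult Q f g r \<noteq> 0} \<subseteq> ?concat ` ({p. f p \<noteq> 0} \<times> {q. g q \<noteq> 0})"
  proof
    fix r assume "r \<in> {r. pmult Q f g r \<noteq> 0}"
    then obtain i where "f (path_end Q (fst r, take i (snd r)), drop i (snd r)) \<noteq> 0"
        "g (fst r, take i (snd r)) \<noteq> 0" using pmult_nonzeroD by blast
    then show "r \<in> ?concat ` ({p. f p \<noteq> 0} \<times> {q. g q \<noteq> 0})"
      by (intro image_eqI[of _ _ "((path_end Q (fst r, take i (snd r)), drop i (snd r)),
                                   (fst r, take i (snd r)))"]) auto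
  qed
  moreover have "finite ({p. f p \<noteq> 0} \<times> {q. g q \<noteq> 0})"
    using f g by (simp add: kH_finite_supp)
  ultimately have "finite {r. pmult Q f g r \<noteq> 0}"
    by (meson finite_imageI finite_subset)
  then show ?thesis unfolding kH_def using pmult_nonzeroD by blast
qed

lemma pmult_padd_left: "pmult Q (padd f g) h = padd (pmult Q f h) (pmult Q g h)"
  by (rule ext) (simp add: pmult_def distrib_right sum.distrib)
lemma pmult_padd_right: "pmult Q f (padd g h) = padd (pmult Q f g) (pmult Q f h)"
  by (rule ext) (simp add: pmult_def distrib_left sum.distrib)
lemma pmult_psub_right: "pmult Q f (psub g h) = psub (pmult Q f g) (pmult Q f h)"
  by (rule ext) (simp add: pmult_def right_diff_distrib sum_subtractf)
lemma pmult_smul_left: "pmult Q (smul c f) h = smul c (pmult Q f h)"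
  by (rule ext) (simp add: pmult_def sum_distrib_left mult.assoc)
lemma pmult_pzero_left [simp]: "pmult Q pzero h = pzero"
  by (rule ext) (simp add: pmult_def)
lemma pmult_pzero_right [simp]: "pmult Q f pzero = pzero"
  by (rule ext) (simp add: pmult_def)
lemma pmult_smul_right: "pmult Q f (smul c h) = smul c (pmult Q f h)"
  by (rule ext) (simp add: pmult_def sum_distrib_left mult.left_commute)

lemma pmult_Nil: "pmult Q f g (x, []) = (if x \<in> verts Q then f (x, []) * g (x, []) else 0)"
  by (simp add: pmult_def)

lemma pmult_single_arrow:
  "pmult Q f g (x, [a]) =
     (if valid_path Q (x, [a]) then f (x, [a]) * g (x, []) + f (tgt Q a, []) * g (x, [a]) else 0)"
proof -
  have "{0..length [a]} = {0, 1::nat}" by auto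
  then show ?thesis by (simp add: pmult_def path_end_def)
qed

lemma pmult_pbasis_right:
  "pmult Q f (pbasis q) r =
     (if valid_path Q r \<and> fst r = fst q \<and> take (length (snd q)) (snd r) = snd q
      then f (path_end Q q, drop (length (snd q)) (snd r)) else 0)"
proof (cases "valid_path Q r")
  case True
  obtain x xs where r: "r = (x, xs)" by force
  let ?k = "length (snd q)" and ?C = "x = fst q \<and> take (length (snd q)) xs = snd q"
  have "pmult Q f (pbasis q) r =
        (\<Sum>i\<in>{0..length xs}. if i = ?k then (if ?C then f (path_end Q q, drop ?k xs) else 0) else 0)"
    unfolding pmult_def r fst_conv snd_conv if_P[OF True[unfolded r]]
  proof (rule sum.cong)
    fix i assume "i \<in> {0..length xs}"
    then have "(x, take i xs) = q \<longleftrightarrow> i = ?k \<and> ?C" by (cases q) auto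
    then show "f (path_end Q (x, take i xs), drop i xs) * pbasis q (x, take i xs) =
        (if i = ?k then (if ?C then f (path_end Q q, drop ?k xs) else 0) else 0)"
      by (auto simp: pbasis_apply)
  qed simp
  also have "\<dots> = (if ?C then f (path_end Q q, drop ?k xs) else 0)"
  proof -
    have "?C \<Longrightarrow> ?k \<le> length xs" by (metis length_take min.absorb_iff2)
    then show ?thesis by (auto simp: sum.delta)
  qed
  finally show ?thesis using True r by simp
qed (simp add: pmult_def)

lemma pmult_arr_right:
  "pmult Q h (arr Q a) r =
     (if valid_path Q r \<and> fst r = src Q a \<and> take 1 (snd r) = [a] then h (tgt Q a, drop 1 (snd r)) else 0)"
  by (simp add: arr_def pmult_pbasis_right)

lemma pmult_pbasis:
  "pmult Q (pbasis p) (pbasis q) =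
     (if path_end Q q = fst p \<and> valid_path Q (fst q, snd q @ snd p)
      then pbasis (fst q, snd q @ snd p) else pzero)"
proof (rule ext)
  fix r
  have "fst r = fst q \<and> take (length (snd q)) (snd r) = snd q \<and>
          (path_end Q q, drop (length (snd q)) (snd r)) = p \<longleftrightarrow>
        path_end Q q = fst p \<and> r = (fst q, snd q @ snd p)"
    by (cases r; cases p) (auto, metis append_take_drop_id)
  then show "pmult Q (pbasis p) (pbasis q) r = (if path_end Q q = fst p \<and> valid_path Q (fst q, snd q @ snd p)
      then pbasis (fst q, snd q @ snd p) else pzero) r"
    by (auto simp: pmult_pbasis_right pbasis_apply)
qed

locale finite_quiver =
  fixes Q :: "('v,'e) quiver"
  assumes finite_verts: "finite (verts Q)"
    and finite_arrs: "finite (arrs Q)"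
    and arrow_ends: "\<forall>a\<in>arrs Q. src Q a \<in> verts Q \<and> tgt Q a \<in> verts Q"
begin

lemma valid_path_Cons:
  "valid_path Q (x, a # ys) \<longleftrightarrow>
     x \<in> verts Q \<and> a \<in> arrs Q \<and> src Q a = x \<and> valid_path Q (tgt Q a, ys)"
proof -
  have "(\<forall>i. i < length ys \<longrightarrow> tgt Q ((a # ys) ! i) = src Q (ys ! i)) \<longleftrightarrow>
        (ys \<noteq> [] \<longrightarrow> src Q (hd ys) = tgt Q a) \<and>
        (\<forall>i. Suc i < length ys \<longrightarrow> tgt Q (ys ! i) = src Q (ys ! Suc i))"
    by (cases ys) (auto simp: nth_Cons split: nat.splits)
  then show ?thesis
    unfolding valid_path_def using arrow_ends by auto
qed

lemma valid_path_take: "valid_path Q (x, xs) \<Longrightarrow> valid_path Q (x, take i xs)"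
  by (induction xs arbitrary: x i) (auto simp: valid_path_Cons take_Cons split: nat.splits)

lemma valid_path_drop:
  "valid_path Q (x, xs) \<Longrightarrow> valid_path Q (path_end Q (x, take i xs), drop i xs)"
  by (induction xs arbitrary: x i) (auto simp: valid_path_Cons take_Cons split: nat.splits)

lemma valid_path_end: "valid_path Q p \<Longrightarrow> path_end Q p \<in> verts Q"
  using valid_path_drop[of "fst p" "snd p" "length (snd p)"] by (simp add: valid_path_def)

lemma valid_path_arr: "a \<in> arrs Q \<Longrightarrow> valid_path Q (src Q a, [a])"
  using arrow_ends by (simp add: valid_path_Cons)

lemma arr_kH: "a \<in> arrs Q \<Longrightarrow> arr Q a \<in> kH Q"
  unfolding arr_def by (intro pbasis_kH valid_path_arr)

lemma idem_kH: "x \<in> verts Q \<Longrightarrow> idem x \<in> kH Q"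
  unfolding idem_def by (intro pbasis_kH) simp

lemma pone_kH: "(pone Q :: ('v,'e,'k::field) elem) \<in> kH Q"
  unfolding kH_def mem_Collect_eq
proof (intro conjI allI impI)
  have "{p. pone Q p \<noteq> (0::'k)} \<subseteq> (\<lambda>x. (x, [])) ` verts Q"
    by (auto simp: pone_def)
  then show "finite {p. pone Q p \<noteq> (0::'k)}"
    using finite_verts by (auto intro: finite_subset)
next
  fix p assume "pone Q p \<noteq> (0::'k)"
  then show "valid_path Q p" by (cases p) (auto simp: pone_def split: if_splits)
qed

lemma pmult_pone_left:
  assumes g: "g \<in> kH Q"
  shows "pmult Q (pone Q) g = g"
proof (rule ext)
  fix r :: "('v,'e) path"
  obtain x xs where r: "r = (x, xs)" by force
  show "pmult Q (pone Q) g r = g r"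
  proof (cases "valid_path Q r")
    case True
    have "pmult Q (pone Q) g r = (\<Sum>i\<in>{0..length xs}. if i = length xs then g r else 0)"
      unfolding pmult_def r fst_conv snd_conv if_P[OF True[unfolded r]]
    proof (rule sum.cong)
      fix i assume "i \<in> {0..length xs}"
      moreover have "path_end Q (x, xs) \<in> verts Q" using True r by (simp add: valid_path_end)
      ultimately show "pone Q (path_end Q (x, take i xs), drop i xs) * g (x, take i xs) =
          (if i = length xs then g (x, xs) else 0)"
        by (auto simp: pone_def)
    qed simp
    then show ?thesis by simp
  qed (use kH_valid[OF g, of r] in \<open>auto simp: pmult_def\<close>)
qed

lemma pmult_pone_right:
  assumes f: "f \<in> kH Q"
  shows "pmult Q f (pone Q) = f"
proof (rule ext)
  fix r :: "('v,'e) path"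
  obtain x xs where r: "r = (x, xs)" by force
  show "pmult Q f (pone Q) r = f r"
  proof (cases "valid_path Q r")
    case True
    have "pmult Q f (pone Q) r = (\<Sum>i\<in>{0..length xs}. if i = 0 then f r else 0)"
      unfolding pmult_def r fst_conv snd_conv if_P[OF True[unfolded r]]
    proof (rule sum.cong)
      fix i assume "i \<in> {0..length xs}"
      moreover have "x \<in> verts Q" using True r valid_path_verts by force
      ultimately show "f (path_end Q (x, take i xs), drop i xs) * pone Q (x, take i xs) =
          (if i = 0 then f (x, xs) else 0)"
        by (auto simp: pone_def)
    qed simp
    then show ?thesis by simp
  qed (use kH_valid[OF f, of r] in \<open>auto simp: pmult_def\<close>)
qed

lemma pmult_idem_right:
  assumes "h \<in> kH Q" and "supp_starts_at x h"
  shows "pmult Q h (idem x) = h"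
  using assms kH_valid unfolding supp_starts_at_def
  by (intro ext) (force simp: idem_def pmult_pbasis_right)

lemma pmult_assoc_arr:
  assumes a: "a \<in> arrs Q"
  shows "pmult Q (pmult Q u x) (arr Q a) = pmult Q u (pmult Q x (arr Q a))"
proof (rule ext)
  fix r :: "('v,'e) path"
  show "pmult Q (pmult Q u x) (arr Q a) r = pmult Q u (pmult Q x (arr Q a)) r"
  proof (cases "valid_path Q r \<and> fst r = src Q a \<and> take 1 (snd r) = [a]")
    case True
    then obtain ys where r: "r = (src Q a, a # ys)"
      by (cases r; cases "snd r") auto
    have v: "valid_path Q (src Q a, a # ys)" using True r by simp
    then have ys: "valid_path Q (tgt Q a, ys)" by (simp add: valid_path_Cons)
    have vt: "valid_path Q (src Q a, a # take j ys)" for j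
      using valid_path_take[OF v, of "Suc j"] by simp
    have "pmult Q u (pmult Q x (arr Q a)) r =
        (\<Sum>i\<in>{0..Suc (length ys)}. u (path_end Q (src Q a, take i (a # ys)), drop i (a # ys)) *
            pmult Q x (arr Q a) (src Q a, take i (a # ys)))"
      using v unfolding r by (simp add: pmult_def[of _ u])
    also have "\<dots> = (\<Sum>j\<in>{0..length ys}.
        u (path_end Q (tgt Q a, take j ys), drop j ys) * x (tgt Q a, take j ys))"
      using vt by (subst sum.atLeast0_atMost_Suc_shift) (simp add: pmult_arr_right)
    also have "\<dots> = pmult Q (pmult Q u x) (arr Q a) r"
      using v ys unfolding r by (simp add: pmult_arr_right pmult_def[of _ u])
    finally show ?thesis ..
  next
    case False
    then have "pmult Q x (arr Q a) (fst r, take i (snd r)) = 0" if "valid_path Q r" for i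
      using that by (cases i) (auto simp: pmult_arr_right)
    then have "pmult Q u (pmult Q x (arr Q a)) r = 0" by (simp add: pmult_def[of _ u])
    moreover have "pmult Q (pmult Q u x) (arr Q a) r = 0"
      using False unfolding pmult_arr_right by (rule if_not_P)
    ultimately show ?thesis by simp
  qed
qed

end

section \<open>Ideals of the path algebra\<close>

lemma ideal_gen_kH:
  assumes "X \<subseteq> kH Q" shows "ideal_gen Q X \<subseteq> kH Q"
proof
  fix x assume "x \<in> ideal_gen Q X"
  then show "x \<in> kH Q"
  proof (induction rule: ideal_gen.induct)
    case (gen x)
    then show ?case using assms by blast
  qed (blast intro: pzero_kH padd_kH pmult_kH)+
qed

lemma supp_length_ge_padd:
  "supp_length_ge n f \<Longrightarrow> supp_length_ge n g \<Longrightarrow> supp_length_ge n (padd f g)"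
  unfolding supp_length_ge_def by (metis add.right_neutral padd_apply)

lemma ideal_gen_supp_length_ge:
  assumes "X \<subseteq> {f. f \<in> kH Q \<and> supp_length_ge n f}"
  shows "ideal_gen Q X \<subseteq> {f. f \<in> kH Q \<and> supp_length_ge n f}"
proof
  fix x assume "x \<in> ideal_gen Q X"
  then show "x \<in> {f. f \<in> kH Q \<and> supp_length_ge n f}"
  proof (induction rule: ideal_gen.induct)
    case (gen x)
    then show ?case using assms by blast
  next
    case zero
    then show ?case by (simp add: supp_length_ge_def kH_def)
  next
    case (add a b)
    then show ?case by (blast intro: padd_kH supp_length_ge_padd)
  next
    case (mult a u w)
    then have "supp_length_ge (0 + (n + 0)) (pmult Q u (pmult Q a w))"
      by (intro supp_length_ge_pmult) (auto simp: supp_length_ge_def)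
    then show ?case using mult by (simp add: pmult_kH)
  qed
qed

lemma pbasis_expansion:
  assumes "f \<in> kH Q"
  shows "f = (\<lambda>r. \<Sum>p | f p \<noteq> 0. smul (f p) (pbasis p) r)"
proof (rule ext)
  fix r
  have "(\<Sum>p | f p \<noteq> 0. smul (f p) (pbasis p) r) = (\<Sum>p | f p \<noteq> 0. if r = p then f p else 0)"
    by (rule sum.cong) (auto simp: pbasis_apply)
  also have "\<dots> = f r" using kH_finite_supp[OF assms] by (simp add: sum.delta)
  finally show "f r = (\<Sum>p | f p \<noteq> 0. smul (f p) (pbasis p) r)" ..
qed

context finite_quiver
begin

lemma ideal_gen_pmult_left:
  assumes "X \<subseteq> kH Q" and "x \<in> ideal_gen Q X" and "u \<in> kH Q"
  shows "pmult Q u x \<in> ideal_gen Q X"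
  using ideal_gen.mult[OF assms(2,3) pone_kH]
    pmult_pone_right[OF subsetD[OF ideal_gen_kH[OF assms(1)] assms(2)]] by simp

lemma ideal_gen_smul:
  assumes "X \<subseteq> kH Q" and "x \<in> ideal_gen Q X"
  shows "smul c x \<in> ideal_gen Q X"
  using ideal_gen_pmult_left[OF assms smul_kH[OF pone_kH]]
    pmult_pone_left[OF subsetD[OF ideal_gen_kH[OF assms(1)] assms(2)]]
  by (simp add: pmult_smul_left)

lemma ideal_gen_sum:
  assumes "finite F" and "\<And>p. p \<in> F \<Longrightarrow> g p \<in> ideal_gen Q X"
  shows "(\<lambda>r. \<Sum>p\<in>F. g p r) \<in> ideal_gen Q X"
  using assms
proof (induction F rule: finite_induct)
  case empty
  then show ?case using ideal_gen.zero by (simp add: pzero_def)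
next
  case (insert a F)
  then have "padd (g a) (\<lambda>r. \<Sum>p\<in>F. g p r) \<in> ideal_gen Q X"
    by (intro ideal_gen.add) auto
  then show ?case using insert.hyps by (simp add: padd_def)
qed

lemma pbasis_in_arrow_ideal_pow:
  "valid_path Q p \<Longrightarrow> n \<le> length (snd p) \<Longrightarrow> pbasis p \<in> ideal_pow Q (arrow_ideal Q) n"
proof (induction n arbitrary: p)
  case 0
  then show ?case by (simp add: pbasis_kH)
next
  case (Suc n)
  then obtain a ys where p: "p = (src Q a, a # ys)" and a: "a \<in> arrs Q"
    and ys: "valid_path Q (tgt Q a, ys)" "n \<le> length ys"
    by (cases p; cases "snd p") (auto simp: valid_path_Cons)
  have "pbasis p = pmult Q (pbasis (tgt Q a, ys)) (arr Q a)"
    using Suc.prems(1) unfolding p arr_def pmult_pbasis by simp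
  moreover have "arr Q a \<in> arrow_ideal Q"
    unfolding arrow_ideal_def using a by (blast intro: ideal_gen.gen)
  ultimately show ?case
    using Suc.IH[of "(tgt Q a, ys)"] ys by (auto intro: ideal_gen.gen)
qed

lemma arrow_ideal_subset: "arrow_ideal Q \<subseteq> {f. f \<in> kH Q \<and> supp_length_ge 1 f}"
  unfolding arrow_ideal_def
  by (rule ideal_gen_supp_length_ge)
    (auto simp: arr_kH supp_length_ge_def arr_def pbasis_apply split: if_splits
      intro: pbasis_kH valid_path_arr)

lemma arrow_ideal_pow_subset:
  "ideal_pow Q (arrow_ideal Q) n \<subseteq> {f :: ('v,'e,'k::field) elem. f \<in> kH Q \<and> supp_length_ge n f}"
proof (induction n)
  case 0
  then show ?case by (simp add: supp_length_ge_def)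
next
  case (Suc n)
  have "pmult Q x y \<in> kH Q \<and> supp_length_ge (Suc n) (pmult Q x y)"
    if "x \<in> ideal_pow Q (arrow_ideal Q) n" and "y \<in> arrow_ideal Q" for x y :: "('v,'e,'k) elem"
  proof -
    have x: "x \<in> kH Q" "supp_length_ge n x" using that(1) Suc.IH by auto
    have y: "y \<in> kH Q" "supp_length_ge 1 y" using that(2) arrow_ideal_subset by auto
    show ?thesis using pmult_kH[OF x(1) y(1)] supp_length_ge_pmult[OF x(2) y(2)] by simp
  qed
  then show ?case
    unfolding ideal_pow.simps by (intro ideal_gen_supp_length_ge) blast
qed

lemma arrow_ideal_powI:
  assumes f: "f \<in> kH Q" and "supp_length_ge n f"
  shows "f \<in> ideal_pow Q (arrow_ideal Q) n"
proof (cases n)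
  case 0
  then show ?thesis using f by simp
next
  case (Suc k)
  let ?gens = "{pmult Q x y | x y. x \<in> ideal_pow Q (arrow_ideal Q) k \<and> y \<in> arrow_ideal Q}"
  have gens: "?gens \<subseteq> kH Q"
    using arrow_ideal_pow_subset[of k] arrow_ideal_subset by (auto intro: pmult_kH)
  have "pbasis p \<in> ideal_gen Q ?gens" if "f p \<noteq> 0" for p
  proof -
    have "valid_path Q p" "n \<le> length (snd p)"
      using that kH_valid[OF f] assms(2) unfolding supp_length_ge_def by blast+
    then show ?thesis using pbasis_in_arrow_ideal_pow[of p n] Suc by simp
  qed
  then have summands: "smul (f p) (pbasis p) \<in> ideal_gen Q ?gens" if "f p \<noteq> 0" for p
    using that by (intro ideal_gen_smul[OF gens])
  have "(\<lambda>r. \<Sum>p | f p \<noteq> 0. smul (f p) (pbasis p) r) \<in> ideal_gen Q ?gens"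
    by (intro ideal_gen_sum kH_finite_supp[OF f] summands) simp
  then show ?thesis
    using pbasis_expansion[OF f] Suc by simp
qed

end


section \<open>Submodules of P_y as left ideals of kH\<close>

definition left_ideal :: "('v,'e) quiver \<Rightarrow> ('v,'e,'k::field) elem set \<Rightarrow> bool" where
  "left_ideal Q T \<longleftrightarrow> T \<subseteq> kH Q \<and> pzero \<in> T \<and> (\<forall>x\<in>T. \<forall>y\<in>T. padd x y \<in> T)
     \<and> (\<forall>u\<in>kH Q. \<forall>x\<in>T. pmult Q u x \<in> T)"

lemma emb_0 [simp]: "emb f 0 = f" by (simp add: emb_def)
lemma emb_eq_iff [simp]: "emb x = emb y \<longleftrightarrow> x = y" by (metis emb_0)
lemma emb_in_image_iff [simp]: "emb x \<in> emb ` T \<longleftrightarrow> x \<in> T" by auto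
lemma emb_image_subset_iff [simp]: "emb ` A \<subseteq> emb ` B \<longleftrightarrow> A \<subseteq> B" by auto
lemma emb_image_eq_iff [simp]: "emb ` A = emb ` B \<longleftrightarrow> A = B" by (simp add: set_eq_subset)
lemma emb_pzero: "emb pzero = vzero" by (rule ext) (simp add: emb_def vzero_def)
lemma vadd_emb: "vadd (emb x) (emb y) = emb (padd x y)"
  by (rule ext) (auto simp: emb_def vadd_def padd_def pzero_def)
lemma vsub_emb: "vsub (emb x) (emb y) = emb (psub x y)"
  by (rule ext) (auto simp: emb_def vsub_def psub_def pzero_def)
lemma vact_emb: "vact Q u (emb x) = emb (pmult Q u x)"
  by (rule ext) (auto simp: emb_def vact_def)

lemma emb_image_preimage: "N \<subseteq> emb ` A \<Longrightarrow> N = emb ` {x. emb x \<in> N}"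
  by auto

lemma emb_apply_kH_iff: "(\<forall>i. emb x i \<in> kH Q) \<longleftrightarrow> x \<in> kH Q"
  unfolding emb_def by (metis pzero_kH)

lemma submod_emb_image_iff: "submod Q (emb ` T) \<longleftrightarrow> left_ideal Q T"
proof -
  have "(\<forall>v\<in>emb ` T. \<forall>i. v i \<in> kH Q) \<longleftrightarrow> T \<subseteq> kH Q"
    using emb_apply_kH_iff by blast
  moreover have "vzero \<in> emb ` T \<longleftrightarrow> pzero \<in> T"
    by (simp add: emb_pzero[symmetric])
  moreover have "(\<forall>v\<in>emb ` T. \<forall>w\<in>emb ` T. vadd v w \<in> emb ` T) \<longleftrightarrow> (\<forall>x\<in>T. \<forall>y\<in>T. padd x y \<in> T)"
    by (simp add: vadd_emb)
  moreover have "(\<forall>u\<in>kH Q. \<forall>v\<in>emb ` T. vact Q u v \<in> emb ` T) \<longleftrightarrow> (\<forall>u\<in>kH Q. \<forall>x\<in>T. pmult Q u x \<in> T)"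
    by (simp add: vact_emb)
  ultimately show ?thesis
    unfolding submod_def left_ideal_def by blast
qed

context finite_quiver
begin

lemma left_ideal_padd: "left_ideal Q T \<Longrightarrow> x \<in> T \<Longrightarrow> y \<in> T \<Longrightarrow> padd x y \<in> T"
  unfolding left_ideal_def by blast

lemma left_ideal_pmult: "left_ideal Q T \<Longrightarrow> u \<in> kH Q \<Longrightarrow> x \<in> T \<Longrightarrow> pmult Q u x \<in> T"
  unfolding left_ideal_def by blast

lemma left_ideal_pzero: "left_ideal Q T \<Longrightarrow> pzero \<in> T"
  unfolding left_ideal_def by blast

lemma left_ideal_kH: "left_ideal Q T \<Longrightarrow> T \<subseteq> kH Q"
  unfolding left_ideal_def by blast

lemma left_ideal_smul: "left_ideal Q T \<Longrightarrow> x \<in> T \<Longrightarrow> smul c x \<in> T"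
  using left_ideal_pmult[OF _ smul_kH[OF pone_kH]] left_ideal_kH pmult_pone_left
  by (metis pmult_smul_left subsetD)

lemma left_ideal_psub: "left_ideal Q T \<Longrightarrow> x \<in> T \<Longrightarrow> y \<in> T \<Longrightarrow> psub x y \<in> T"
proof -
  assume T: "left_ideal Q T" and "x \<in> T" "y \<in> T"
  then have "padd x (smul (-1) y) \<in> T" by (intro left_ideal_padd left_ideal_smul)
  moreover have "padd x (smul (-1) y) = psub x y" by (rule ext) simp
  ultimately show ?thesis by simp
qed

lemma left_ideal_smul_cancel:
  assumes "left_ideal Q T" and "smul c x \<in> T" and "c \<noteq> 0"
  shows "x \<in> T"
proof -
  have "smul (1 / c) (smul c x) = x" by (rule ext) (simp add: assms(3))
  then show ?thesis using left_ideal_smul[OF assms(1,2)] by metis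
qed

end

locale admissible_ideal = finite_quiver Q for Q :: "('v,'e) quiver" +
  fixes sig :: "('v,'e,'k::field) elem set" and m :: nat
  assumes sig_kH: "sig \<subseteq> kH Q" and m_pos: "1 \<le> m"
    and arrow_pow_m_subset: "ideal_pow Q (arrow_ideal Q) m \<subseteq> ideal_gen Q sig"
    and subset_arrow_pow_2: "ideal_gen Q sig \<subseteq> ideal_pow Q (arrow_ideal Q) 2"
begin

abbreviation I :: "('v,'e,'k) elem set" where "I \<equiv> ideal_gen Q sig"

lemma I_kH: "x \<in> I \<Longrightarrow> x \<in> kH Q"
  using ideal_gen_kH[OF sig_kH] by blast

lemma I_vanishes_short:
  assumes "x \<in> I" and "length (snd r) < 2"
  shows "x r = 0"
proof -
  have "supp_length_ge 2 x"
    using assms(1) subset_arrow_pow_2 arrow_ideal_pow_subset by blast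
  then show ?thesis using assms(2) leD unfolding supp_length_ge_def by blast
qed

lemma I_vanishes_Nil: "x \<in> I \<Longrightarrow> x (y, []) = 0"
  by (simp add: I_vanishes_short)

lemma I_vanishes_single: "x \<in> I \<Longrightarrow> x (y, [a]) = 0"
  by (simp add: I_vanishes_short)

lemma long_in_I: "f \<in> kH Q \<Longrightarrow> supp_length_ge m f \<Longrightarrow> f \<in> I"
  by (rule subsetD[OF arrow_pow_m_subset arrow_ideal_powI])

lemma left_ideal_I: "left_ideal Q I"
  unfolding left_ideal_def
  using I_kH ideal_gen.zero ideal_gen.add ideal_gen_pmult_left[OF sig_kH] by blast

lemma I_padd: "a \<in> I \<Longrightarrow> b \<in> I \<Longrightarrow> padd a b \<in> I"
  by (rule ideal_gen.add)

lemma I_psub: "a \<in> I \<Longrightarrow> b \<in> I \<Longrightarrow> psub a b \<in> I"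
  by (rule left_ideal_psub[OF left_ideal_I])

lemma I_pmult_left: "a \<in> I \<Longrightarrow> u \<in> kH Q \<Longrightarrow> pmult Q u a \<in> I"
  by (rule ideal_gen_pmult_left[OF sig_kH])

lemma smul_arr_in_I_iff: "smul c (arr Q a) \<in> I \<longleftrightarrow> c = 0"
  using I_vanishes_single[of "smul c (arr Q a)" "src Q a" a] ideal_gen.zero
  by (auto simp: arr_def pbasis_apply)

lemma arr_notin_I: "arr Q a \<notin> I"
  using smul_arr_in_I_iff[of 1 a] by (simp add: smul_def)

lemma idem_notin_I: "idem x \<notin> I"
  using I_vanishes_Nil[of "idem x" x] by (auto simp: idem_def pbasis_apply)

text \<open>Lifts to kH of P_y = (kH e_y + I)/I and of its radical.\<close>

definition Pset :: "'v \<Rightarrow> ('v,'e,'k) elem set" where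
  "Pset y = {padd h g | h g. h \<in> kH Q \<and> supp_starts_at y h \<and> g \<in> I}"

definition radPset :: "'v \<Rightarrow> ('v,'e,'k) elem set" where
  "radPset y = {x \<in> Pset y. x (y, []) = 0}"

definition radPset_avoiding :: "'v \<Rightarrow> 'e \<Rightarrow> ('v,'e,'k) elem set" where
  "radPset_avoiding y a = {x \<in> radPset y. x (y, [a]) = 0}"

lemma PsetE:
  assumes "x \<in> Pset y"
  obtains h g where "x = padd h g" "h \<in> kH Q" "supp_starts_at y h" "g \<in> I"
  using assms unfolding Pset_def by blast

lemma Pset_kH: "x \<in> Pset y \<Longrightarrow> x \<in> kH Q"
  by (auto elim!: PsetE intro: padd_kH I_kH)

lemma PsetI: "h \<in> kH Q \<Longrightarrow> supp_starts_at y h \<Longrightarrow> g \<in> I \<Longrightarrow> padd h g \<in> Pset y"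
  unfolding Pset_def by blast

lemma I_subset_Pset: "I \<subseteq> Pset y"
  using PsetI[OF pzero_kH supp_starts_at_pzero] by fastforce

lemma supp_starts_at_in_Pset: "h \<in> kH Q \<Longrightarrow> supp_starts_at y h \<Longrightarrow> h \<in> Pset y"
  using PsetI[OF _ _ ideal_gen.zero] by fastforce

lemma idem_in_Pset: "y \<in> verts Q \<Longrightarrow> idem y \<in> Pset y"
  by (intro supp_starts_at_in_Pset idem_kH supp_starts_at_idem)

lemma arr_in_Pset: "a \<in> arrs Q \<Longrightarrow> arr Q a \<in> Pset (src Q a)"
  by (intro supp_starts_at_in_Pset arr_kH supp_starts_at_arr)

lemma left_ideal_Pset: "left_ideal Q (Pset y)"
  unfolding left_ideal_def
proof (intro conjI ballI subsetI)
  show "pzero \<in> Pset y" using I_subset_Pset ideal_gen.zero by (rule subsetD)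
next
  fix x assume "x \<in> Pset y" then show "x \<in> kH Q" by (rule Pset_kH)
next
  fix x z assume "x \<in> Pset y" "z \<in> Pset y"
  then obtain h1 g1 h2 g2 where x: "x = padd h1 g1" "h1 \<in> kH Q" "supp_starts_at y h1" "g1 \<in> I"
     and z: "z = padd h2 g2" "h2 \<in> kH Q" "supp_starts_at y h2" "g2 \<in> I"
    by (auto elim!: PsetE)
  have "padd x z = padd (padd h1 h2) (padd g1 g2)" by (rule ext) (simp add: x z add_ac)
  then show "padd x z \<in> Pset y"
    using x z by (simp add: PsetI padd_kH supp_starts_at_padd I_padd)
next
  fix u x :: "('v,'e,'k) elem" assume u: "u \<in> kH Q" and "x \<in> Pset y"
  then obtain h g where x: "x = padd h g" "h \<in> kH Q" "supp_starts_at y h" "g \<in> I"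
    by (auto elim!: PsetE)
  have "pmult Q u x = padd (pmult Q u h) (pmult Q u g)" using x by (simp add: pmult_padd_right)
  then show "pmult Q u x \<in> Pset y"
    using x u by (simp add: PsetI pmult_kH supp_starts_at_pmult I_pmult_left)
qed

lemma Pmod_eq: "y \<in> verts Q \<Longrightarrow> Pmod Q I y = (emb ` Pset y, emb ` I)"
proof -
  assume y: "y \<in> verts Q"
  have "{padd (pmult Q f (idem y)) g | f g. f \<in> kH Q \<and> g \<in> I} = Pset y"
  proof (intro equalityI subsetI)
    fix x assume "x \<in> {padd (pmult Q f (idem y)) g | f g. f \<in> kH Q \<and> g \<in> I}"
    then obtain f g where "x = padd (pmult Q f (idem y)) g" "f \<in> kH Q" "g \<in> I" by blast
    moreover have "supp_starts_at y (pmult Q f (idem y))"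
      by (rule supp_starts_at_pmult) (simp add: supp_starts_at_def idem_def pbasis_apply)
    ultimately show "x \<in> Pset y"
      unfolding Pset_def using idem_kH[OF y] pmult_kH by blast
  next
    fix x assume "x \<in> Pset y"
    then obtain h g where hg: "x = padd h g" "h \<in> kH Q" "supp_starts_at y h" "g \<in> I"
      by (rule PsetE)
    then have "x = padd (pmult Q h (idem y)) g" by (simp add: pmult_idem_right)
    then show "x \<in> {padd (pmult Q f (idem y)) g | f g. f \<in> kH Q \<and> g \<in> I}"
      using hg by blast
  qed
  moreover have "{emb (padd (pmult Q f (idem y)) g) | f g. f \<in> kH Q \<and> g \<in> I} =
      emb ` {padd (pmult Q f (idem y)) g | f g. f \<in> kH Q \<and> g \<in> I}" by blast
  ultimately show ?thesis unfolding Pmod_def idem_def[symmetric] by simp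
qed

lemma emb_image_in_submods_Pmod_iff:
  assumes "y \<in> verts Q"
  shows "emb ` T \<in> submods Q (Pmod Q I y) \<longleftrightarrow> left_ideal Q T \<and> I \<subseteq> T \<and> T \<subseteq> Pset y"
  unfolding submods_def Pmod_eq[OF assms] by (simp add: submod_emb_image_iff)

lemma submods_PmodE:
  assumes "y \<in> verts Q" and "N \<in> submods Q (Pmod Q I y)"
  obtains T where "N = emb ` T" "left_ideal Q T" "I \<subseteq> T" "T \<subseteq> Pset y"
proof -
  have "N \<subseteq> emb ` Pset y" using assms(2) unfolding submods_def Pmod_eq[OF assms(1)] by simp
  then have "N = emb ` {x. emb x \<in> N}" by (rule emb_image_preimage)
  moreover from this have "left_ideal Q {x. emb x \<in> N} \<and> I \<subseteq> {x. emb x \<in> N} \<and> {x. emb x \<in> N} \<subseteq> Pset y"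
    using assms(2) emb_image_in_submods_Pmod_iff[OF assms(1)] by metis
  ultimately show ?thesis using that by blast
qed

definition ideal_chain :: "'v \<Rightarrow> nat \<Rightarrow> (nat \<Rightarrow> ('v,'e,'k) elem set) \<Rightarrow> bool" where
  "ideal_chain y n T \<longleftrightarrow> T 0 = I \<and> T n = Pset y
     \<and> (\<forall>i\<le>n. left_ideal Q (T i) \<and> I \<subseteq> T i \<and> T i \<subseteq> Pset y) \<and> (\<forall>i<n. T i \<subset> T (Suc i))"

lemma has_chain_Pmod_iff:
  assumes y: "y \<in> verts Q"
  shows "has_chain Q (Pmod Q I y) n \<longleftrightarrow> (\<exists>T. ideal_chain y n T)"
proof
  assume "has_chain Q (Pmod Q I y) n"
  then obtain c where c0: "c 0 = snd (Pmod Q I y)" and cn: "c n = fst (Pmod Q I y)"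
    and cs: "\<forall>i\<le>n. c i \<in> submods Q (Pmod Q I y)" and st: "\<forall>i<n. c i \<subset> c (Suc i)"
    unfolding has_chain_def by blast
  define T where "T i = {x. emb x \<in> c i}" for i
  have cT: "c i = emb ` T i \<and> left_ideal Q (T i) \<and> I \<subseteq> T i \<and> T i \<subseteq> Pset y" if "i \<le> n" for i
  proof -
    have "c i \<in> submods Q (Pmod Q I y)" using cs that by simp
    then obtain T' where "c i = emb ` T'" "left_ideal Q T'" "I \<subseteq> T'" "T' \<subseteq> Pset y"
      by (rule submods_PmodE[OF y])
    moreover from this have "T i = T'" unfolding T_def by simp
    ultimately show ?thesis by simp
  qed
  have "ideal_chain y n T"
    unfolding ideal_chain_def
  proof (intro conjI allI impI)
    show "T 0 = I" "T n = Pset y" using c0 cn unfolding T_def Pmod_eq[OF y] by simp_all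
  next
    fix i assume "i < n"
    then have "c i \<subset> c (Suc i)" "i \<le> n" "Suc i \<le> n" using st by auto
    then have "emb ` T i \<subset> emb ` T (Suc i)" using cT by simp
    then show "T i \<subset> T (Suc i)" by (simp add: psubset_eq)
  qed (simp_all add: cT)
  then show "\<exists>T. ideal_chain y n T" by blast
next
  assume "\<exists>T. ideal_chain y n T"
  then obtain T where T: "ideal_chain y n T" ..
  show "has_chain Q (Pmod Q I y) n"
    unfolding has_chain_def
  proof (intro exI[of _ "\<lambda>i. emb ` T i"] conjI allI impI)
    fix i
    show "emb ` T i \<in> submods Q (Pmod Q I y)" if "i \<le> n"
      using T that by (simp add: emb_image_in_submods_Pmod_iff[OF y] ideal_chain_def)
    show "emb ` T i \<subset> emb ` T (Suc i)" if "i < n"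
      using T that by (simp add: ideal_chain_def psubset_eq)
  qed (use T in \<open>simp_all add: ideal_chain_def Pmod_eq[OF y]\<close>)
qed

end


section \<open>Finite length of P_y\<close>

lemma bounded_chain_mono:
  assumes "\<And>i. i < n \<Longrightarrow> T i \<subseteq> T (Suc i)" and "i \<le> j" and "j \<le> n"
  shows "T i \<subseteq> T j"
  using assms(2,3)
proof (induction j)
  case (Suc j)
  then show ?case using assms(1)[of j] by (cases "i = Suc j") auto
qed simp

context vector_space
begin

lemma strict_subspace_chain_step:
  assumes sub: "\<And>i. i \<le> n \<Longrightarrow> subspace (T i)"
    and strict: "\<And>i. i < n \<Longrightarrow> T i \<subset> T (Suc i)"
    and top: "\<And>y. y \<in> T n \<Longrightarrow> \<exists>s\<in>span B. y - s \<in> T 0"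
    and i: "i < n"
  shows "\<exists>x\<in>span B. x \<in> T (Suc i) \<and> x \<notin> T i"
proof -
  have mono: "T k \<subseteq> T l" if "k \<le> l" "l \<le> n" for k l
    using bounded_chain_mono[of n T k l] strict that by blast
  obtain y where y: "y \<in> T (Suc i)" "y \<notin> T i" using strict[OF i] by blast
  have "y \<in> T n" using mono[of "Suc i" n] y i by auto
  then obtain s where s: "s \<in> span B" "y - s \<in> T 0" using top by blast
  have ys: "y - s \<in> T i" "y - s \<in> T (Suc i)"
    using s(2) mono[of 0 i] mono[of 0 "Suc i"] i by auto
  have subs: "subspace (T i)" "subspace (T (Suc i))" using sub i by simp_all
  have "y - (y - s) \<in> T (Suc i)" by (rule subspace_diff[OF subs(2) y(1) ys(2)])
  moreover have "s \<notin> T i"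
    using subspace_add[OF subs(1) _ ys(1), of s] y(2) by auto
  ultimately show ?thesis using s(1) by auto
qed

lemma strict_subspace_chain_length_le:
  assumes B: "finite B"
    and sub: "\<And>i. i \<le> n \<Longrightarrow> subspace (T i)"
    and strict: "\<And>i. i < n \<Longrightarrow> T i \<subset> T (Suc i)"
    and top: "\<And>y. y \<in> T n \<Longrightarrow> \<exists>s\<in>span B. y - s \<in> T 0"
  shows "n \<le> card B"
proof -
  obtain x where x: "\<And>i. i < n \<Longrightarrow> x i \<in> T (Suc i) \<and> x i \<notin> T i \<and> x i \<in> span B"
    using strict_subspace_chain_step[OF sub strict top] by metis
  have "independent (x ` {..<k}) \<and> card (x ` {..<k}) = k" if "k \<le> n" for k
    using that
  proof (induction k)
    case (Suc k)
    have xk: "x ` {..<k} \<subseteq> T k"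
    proof
      fix z assume "z \<in> x ` {..<k}"
      then obtain i where "i < k" "z = x i" by blast
      then show "z \<in> T k"
        using x[of i] bounded_chain_mono[of n T "Suc i" k] strict Suc.prems by auto
    qed
    have "span (x ` {..<k}) \<subseteq> T k" using span_minimal[OF xk] sub[of k] Suc.prems by simp
    moreover have "x k \<notin> T k" using x[of k] Suc.prems by simp
    ultimately have "x k \<notin> span (x ` {..<k})" and "x k \<notin> x ` {..<k}" using xk by blast+
    then show ?case using Suc by (simp add: lessThan_Suc independent_insertI)
  qed (simp add: independent_empty)
  then have "independent (x ` {..<n})" "card (x ` {..<n}) = n" by auto
  moreover have "x ` {..<n} \<subseteq> span B" using x by blast
  ultimately show ?thesis using independent_span_bound[OF B] by metis
qed

end

interpretation V: vector_space "smul :: 'k::field \<Rightarrow> ('v,'e,'k) elem \<Rightarrow> ('v,'e,'k) elem"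
  by unfold_locales (simp_all add: fun_eq_iff algebra_simps)

lemma sum_fun_apply: "sum F A x = (\<Sum>a\<in>A. F a x)"
  by (induction A rule: infinite_finite_induct) auto

lemma padd_eq_plus: "padd f g = f + g"
  by (rule ext) simp

lemma pzero_eq_zero: "pzero = 0"
  by (rule ext) simp

context finite_quiver
begin

lemma left_ideal_subspace: "left_ideal Q T \<Longrightarrow> V.subspace T"
  unfolding V.subspace_def pzero_eq_zero[symmetric] padd_eq_plus[symmetric]
  by (simp add: left_ideal_pzero left_ideal_padd left_ideal_smul)

end

context admissible_ideal
begin

definition short_paths :: "'v \<Rightarrow> ('v,'e) path set" where
  "short_paths y = {p. valid_path Q p \<and> fst p = y \<and> length (snd p) < m}"

lemma finite_short_paths: "finite (short_paths y)"
proof -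
  have "short_paths y \<subseteq> {y} \<times> {xs. set xs \<subseteq> arrs Q \<and> length xs \<le> m}"
    unfolding short_paths_def valid_path_def by auto
  moreover have "finite ({y} \<times> {xs. set xs \<subseteq> arrs Q \<and> length xs \<le> m})"
    using finite_lists_length_le[OF finite_arrs] by blast
  ultimately show ?thesis by (rule finite_subset)
qed

text \<open>I contains every path of length at least m, so only the finitely many shorter paths matter.\<close>
lemma Pset_mod_short_paths:
  assumes "x \<in> Pset y"
  shows "\<exists>s\<in>V.span (pbasis ` short_paths y). x - s \<in> I"
proof -
  obtain h g where x: "x = padd h g" and h: "h \<in> kH Q" "supp_starts_at y h" and g: "g \<in> I"
    using assms by (rule PsetE)
  define s where "s = (\<Sum>p\<in>short_paths y. smul (h p) (pbasis p))"
  define hl where "hl r = (if m \<le> length (snd r) then h r else 0)" for r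
  have s: "s r = (if r \<in> short_paths y then h r else 0)" for r
  proof -
    have "s r = (\<Sum>p\<in>short_paths y. if r = p then h p else 0)"
      unfolding s_def sum_fun_apply by (rule sum.cong) (auto simp: pbasis_apply)
    then show ?thesis using finite_short_paths by (simp add: sum.delta)
  qed
  have s_span: "s \<in> V.span (pbasis ` short_paths y)"
    unfolding s_def by (intro V.span_sum V.span_scale V.span_base) auto
  have hl: "hl \<in> I"
  proof (rule long_in_I)
    show "hl \<in> kH Q" by (rule kH_pointwiseI[OF h(1) pzero_kH]) (simp add: hl_def)
    show "supp_length_ge m hl" by (simp add: supp_length_ge_def hl_def)
  qed
  have "x - s = padd hl g"
  proof (rule ext)
    fix r
    have "h r \<noteq> 0 \<Longrightarrow> valid_path Q r \<and> fst r = y"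
      using h kH_valid unfolding supp_starts_at_def by blast
    then show "(x - s) r = padd hl g r"
      unfolding x s hl_def short_paths_def by auto
  qed
  then have "x - s \<in> I" using I_padd[OF hl g] by simp
  then show ?thesis using s_span by blast
qed

theorem has_chain_Pmod_le_card:
  assumes y: "y \<in> verts Q" and "has_chain Q (Pmod Q I y) n"
  shows "n \<le> card (short_paths y)"
proof -
  obtain T where T: "ideal_chain y n T" using assms has_chain_Pmod_iff by blast
  have "n \<le> card (pbasis ` short_paths y :: ('v,'e,'k) elem set)"
  proof (rule V.strict_subspace_chain_length_le)
    show "finite (pbasis ` short_paths y :: ('v,'e,'k) elem set)"
      by (simp add: finite_short_paths)
    show "V.subspace (T i)" if "i \<le> n" for i
      using T that by (simp add: ideal_chain_def left_ideal_subspace)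
    show "T i \<subset> T (Suc i)" if "i < n" for i
      using T that by (simp add: ideal_chain_def)
    show "\<exists>s\<in>V.span (pbasis ` short_paths y). z - s \<in> T 0" if "z \<in> T n" for z
      using T that Pset_mod_short_paths by (simp add: ideal_chain_def)
  qed
  also have "\<dots> \<le> card (short_paths y)" by (rule card_image_le[OF finite_short_paths])
  finally show ?thesis .
qed

lemma has_chain_Pmod_1:
  assumes y: "y \<in> verts Q" shows "has_chain Q (Pmod Q I y) 1"
proof -
  have "I \<subset> Pset y" using I_subset_Pset idem_in_Pset[OF y] idem_notin_I by blast
  then have "ideal_chain y 1 (\<lambda>i. if i = 0 then I else Pset y)"
    unfolding ideal_chain_def by (auto simp: left_ideal_I left_ideal_Pset)
  then show ?thesis using has_chain_Pmod_iff[OF y] by blast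
qed

lemma mod_length_Pmod:
  assumes y: "y \<in> verts Q"
  shows "has_chain Q (Pmod Q I y) (mod_length Q (Pmod Q I y))"
    and "has_chain Q (Pmod Q I y) n \<Longrightarrow> n \<le> mod_length Q (Pmod Q I y)"
  unfolding mod_length_def
  using GreatestI_nat[of "has_chain Q (Pmod Q I y)", OF has_chain_Pmod_1[OF y] has_chain_Pmod_le_card[OF y]]
    Greatest_le_nat[of "has_chain Q (Pmod Q I y)", OF _ has_chain_Pmod_le_card[OF y]]
  by blast+



section \<open>The radical of P_y\<close>

lemma left_ideal_radPset: "left_ideal Q (radPset y)"
  unfolding left_ideal_def radPset_def
  using left_ideal_Pset[of y] unfolding left_ideal_def
  by (auto simp: pmult_Nil)

lemma I_subset_radPset: "I \<subseteq> radPset y"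
  unfolding radPset_def using I_subset_Pset I_vanishes_Nil by blast

lemma radPset_subset_Pset: "radPset y \<subseteq> Pset y"
  unfolding radPset_def by blast

lemma idem_notin_radPset: "idem y \<notin> radPset y"
  unfolding radPset_def by (simp add: idem_def pbasis_apply)

lemma Pset_subset_if_idem_mem:
  assumes T: "left_ideal Q T" "I \<subseteq> T" and "idem y \<in> T"
  shows "Pset y \<subseteq> T"
proof
  fix z assume "z \<in> Pset y"
  then obtain h g where z: "z = padd h g" "h \<in> kH Q" "supp_starts_at y h" "g \<in> I"
    by (rule PsetE)
  have "pmult Q h (idem y) \<in> T" using assms z by (intro left_ideal_pmult)
  then show "z \<in> T"
    using z T left_ideal_padd pmult_idem_right by fastforce
qed

text \<open>An element h of e_y J e_y is nilpotent modulo I, so e_y - h is a unit of e_y kH e_y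
  modulo I: multiplying e_y - h on the left by h, h^2, ... telescopes to e_y - h^m.\<close>
lemma idem_mem_if_unipotent_mem:
  assumes T: "left_ideal Q T" "I \<subseteq> T"
    and h: "h \<in> kH Q" "supp_starts_at y h" "h (y, []) = 0"
    and "psub (idem y) h \<in> T"
  shows "idem y \<in> T"
proof -
  define s where "s k = ((\<lambda>z. pmult Q z h) ^^ k) h" for k
  have h1: "supp_length_ge 1 h"
    using h(2,3) unfolding supp_length_ge_def supp_starts_at_def
    by (metis One_nat_def Suc_leI length_greater_0_conv prod.collapse)
  have s: "s k \<in> kH Q \<and> supp_starts_at y (s k) \<and> supp_length_ge (Suc k) (s k)
      \<and> psub (idem y) (s k) \<in> T" for k
  proof (induction k)
    case 0
    have "s 0 = h" by (simp add: s_def)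
    then show ?case unfolding One_nat_def[symmetric] using h h1 assms(6) by blast
  next
    case (Suc k)
    then have sk: "s k \<in> kH Q" "supp_starts_at y (s k)" "supp_length_ge (Suc k) (s k)"
      "psub (idem y) (s k) \<in> T" by blast+
    have sS: "s (Suc k) = pmult Q (s k) h" by (simp add: s_def)
    have "pmult Q (s k) (psub (idem y) h) = psub (s k) (s (Suc k))"
      unfolding pmult_psub_right sS pmult_idem_right[OF sk(1,2)] ..
    moreover have "pmult Q (s k) (psub (idem y) h) \<in> T"
      using T(1) sk(1) assms(6) by (rule left_ideal_pmult)
    ultimately have "padd (psub (idem y) (s k)) (psub (s k) (s (Suc k))) \<in> T"
      using left_ideal_padd[OF T(1) sk(4)] by simp
    moreover have "padd (psub (idem y) (s k)) (psub (s k) (s (Suc k))) = psub (idem y) (s (Suc k))"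
      by (rule ext) simp
    ultimately have "psub (idem y) (s (Suc k)) \<in> T" by simp
    moreover have "supp_length_ge (Suc (Suc k)) (s (Suc k))"
      using supp_length_ge_pmult[OF sk(3) h1] unfolding sS by simp
    moreover have "s (Suc k) \<in> kH Q" "supp_starts_at y (s (Suc k))"
      unfolding sS using pmult_kH[OF sk(1) h(1)] supp_starts_at_pmult[OF h(2)] by blast+
    ultimately show ?case by blast
  qed
  obtain k where k: "m = Suc k" using m_pos by (cases m) auto
  then have "s k \<in> T" using s[of k] long_in_I T(2) by auto
  then have "padd (psub (idem y) (s k)) (s k) \<in> T" using left_ideal_padd[OF T(1)] s[of k] by blast
  moreover have "padd (psub (idem y) (s k)) (s k) = idem y" by (rule ext) simp
  ultimately show ?thesis by simp
qed

lemma proper_left_ideal_subset_radPset: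
  assumes y: "y \<in> verts Q" and T: "left_ideal Q T" "I \<subseteq> T" "T \<subseteq> Pset y" "T \<noteq> Pset y"
  shows "T \<subseteq> radPset y"
proof
  fix x assume x: "x \<in> T"
  show "x \<in> radPset y"
  proof (rule ccontr)
    assume "x \<notin> radPset y"
    then have c: "x (y, []) \<noteq> 0" using x T(3) unfolding radPset_def by blast
    obtain h g where hg: "x = padd h g" "h \<in> kH Q" "supp_starts_at y h" "g \<in> I"
      using x T(3) PsetE by blast
    define h' where "h' = psub (idem y) (smul (1 / x (y, [])) h)"
    have "h (y, []) = x (y, [])" using hg I_vanishes_Nil[of g y] by simp
    then have h': "h' \<in> kH Q" "supp_starts_at y h'" "h' (y, []) = 0"
      unfolding h'_def using c
      by (intro psub_kH idem_kH[OF y] smul_kH hg(2),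
          intro supp_starts_at_psub supp_starts_at_idem supp_starts_at_smul hg(3),
          simp add: idem_def pbasis_apply)
    have "psub (idem y) h' = psub (smul (1 / x (y, [])) x) (smul (1 / x (y, [])) g)"
      unfolding h'_def hg(1) by (rule ext) (simp add: add_divide_distrib)
    moreover have "smul (1 / x (y, [])) g \<in> T" using T(2) hg(4) left_ideal_smul[OF left_ideal_I] by blast
    ultimately have "psub (idem y) h' \<in> T" using T(1) x by (simp add: left_ideal_psub left_ideal_smul)
    then have "idem y \<in> T" by (rule idem_mem_if_unipotent_mem[OF T(1,2) h'])
    then show False using Pset_subset_if_idem_mem[OF T(1,2)] T(3,4) by blast
  qed
qed

lemma maximal_sub_Pmod_iff:
  assumes y: "y \<in> verts Q"
  shows "maximal_sub Q (Pmod Q I y) N \<longleftrightarrow> N = emb ` radPset y"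
proof -
  have rad: "left_ideal Q (radPset y) \<and> I \<subseteq> radPset y \<and> radPset y \<subseteq> Pset y \<and> radPset y \<noteq> Pset y"
    using left_ideal_radPset I_subset_radPset radPset_subset_Pset idem_notin_radPset idem_in_Pset[OF y]
    by blast
  show ?thesis
  proof
    assume N: "maximal_sub Q (Pmod Q I y) N"
    then obtain T where T: "N = emb ` T" "left_ideal Q T" "I \<subseteq> T" "T \<subseteq> Pset y"
      unfolding maximal_sub_def using submods_PmodE[OF y] by metis
    then have "T \<noteq> Pset y" using N unfolding maximal_sub_def Pmod_eq[OF y] by auto
    then have "T \<subseteq> radPset y" using proper_left_ideal_subset_radPset[OF y T(2-4)] by blast
    then have "N \<subseteq> emb ` radPset y" using T(1) by simp
    moreover have "emb ` radPset y \<in> submods Q (Pmod Q I y)"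
      using rad by (simp add: emb_image_in_submods_Pmod_iff[OF y])
    ultimately have "emb ` radPset y = N \<or> emb ` radPset y = fst (Pmod Q I y)"
      using N unfolding maximal_sub_def by blast
    moreover have "emb ` radPset y \<noteq> fst (Pmod Q I y)" using rad by (simp add: Pmod_eq[OF y])
    ultimately show "N = emb ` radPset y" by simp
  next
    assume N: "N = emb ` radPset y"
    show "maximal_sub Q (Pmod Q I y) N"
      unfolding maximal_sub_def
    proof (intro conjI ballI impI)
      show "N \<in> submods Q (Pmod Q I y)"
        using N rad by (simp add: emb_image_in_submods_Pmod_iff[OF y])
      show "N \<noteq> fst (Pmod Q I y)"
        using N rad by (simp add: Pmod_eq[OF y])
    next
      fix N' assume N': "N' \<in> submods Q (Pmod Q I y)" "N \<subseteq> N'"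
      then obtain T where T: "N' = emb ` T" "left_ideal Q T" "I \<subseteq> T" "T \<subseteq> Pset y"
        using submods_PmodE[OF y] by metis
      then have "T = Pset y \<or> T = radPset y"
        using N N'(2) proper_left_ideal_subset_radPset[OF y T(2-4)] by auto
      then show "N' = N \<or> N' = fst (Pmod Q I y)" using N T(1) by (auto simp: Pmod_eq[OF y])
    qed
  qed
qed

lemma Smod_eq:
  assumes y: "y \<in> verts Q" shows "Smod Q I y = (emb ` Pset y, emb ` radPset y)"
proof -
  have "{N. maximal_sub Q (Pmod Q I y) N} = {emb ` radPset y}"
    using maximal_sub_Pmod_iff[OF y] by blast
  then have "fst (rad Q (Pmod Q I y)) = emb ` Pset y \<inter> emb ` radPset y"
    unfolding rad_def by (simp add: Pmod_eq[OF y])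
  also have "\<dots> = emb ` radPset y" using radPset_subset_Pset by blast
  finally show ?thesis unfolding Smod_def by (simp add: Pmod_eq[OF y])
qed



section \<open>Composition length three\<close>

lemma left_ideal_radPset_avoiding: "left_ideal Q (radPset_avoiding y a)"
  unfolding left_ideal_def radPset_avoiding_def
  using left_ideal_radPset[of y] unfolding left_ideal_def radPset_def
  by (auto simp: pmult_single_arrow)

lemma I_subset_radPset_avoiding: "I \<subseteq> radPset_avoiding y a"
  unfolding radPset_avoiding_def using I_subset_radPset I_vanishes_single by blast

lemma radPset_avoiding_subset: "radPset_avoiding y a \<subseteq> radPset y"
  unfolding radPset_avoiding_def by blast

lemma arr_in_radPset: "a \<in> arrs Q \<Longrightarrow> arr Q a \<in> radPset (src Q a)"
  unfolding radPset_def using arr_in_Pset by (simp add: arr_def pbasis_apply)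

lemma has_chain_Pmod_3:
  assumes a: "a \<in> arrs Q" "src Q a = y"
    and h: "h \<in> radPset_avoiding y a" "h \<notin> I"
  shows "has_chain Q (Pmod Q I y) 3"
proof -
  have y: "y \<in> verts Q" using a arrow_ends by blast
  let ?T = "\<lambda>i. [I, radPset_avoiding y a, radPset y, Pset y] ! i"
  have "I \<subset> radPset_avoiding y a"
    using I_subset_radPset_avoiding h by blast
  moreover have "arr Q a \<notin> radPset_avoiding y a"
    using a(2) by (simp add: radPset_avoiding_def arr_def pbasis_apply)
  then have "radPset_avoiding y a \<subset> radPset y"
    using radPset_avoiding_subset arr_in_radPset[OF a(1)] a(2) by blast
  moreover have "radPset y \<subset> Pset y"
    using radPset_subset_Pset idem_in_Pset[OF y] idem_notin_radPset by blast
  ultimately have "ideal_chain y 3 ?T"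
    unfolding ideal_chain_def
    using left_ideal_I left_ideal_radPset_avoiding left_ideal_radPset left_ideal_Pset
      I_subset_radPset_avoiding I_subset_radPset I_subset_Pset
    by (auto simp: less_Suc_eq le_Suc_eq numeral_3_eq_3)
  then show ?thesis using has_chain_Pmod_iff[OF y] by blast
qed

lemma radPset_eq_I_if_sink:
  assumes "\<forall>a\<in>arrs Q. src Q a \<noteq> y"
  shows "radPset y = I"
proof
  show "radPset y \<subseteq> I"
  proof
    fix x assume x: "x \<in> radPset y"
    then obtain h g where hg: "x = padd h g" "h \<in> kH Q" "supp_starts_at y h" "g \<in> I"
      unfolding radPset_def using PsetE by blast
    have "h = pzero"
    proof (rule ext)
      fix r :: "('v,'e) path"
      show "h r = pzero r"
      proof (rule ccontr)
        assume "h r \<noteq> pzero r"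
        then have "h r \<noteq> 0" by simp
        then have r: "valid_path Q r" "fst r = y" "h r \<noteq> 0"
          using hg(3) kH_valid[OF hg(2)] unfolding supp_starts_at_def by blast+
        then have "snd r = []"
          using assms by (cases r; cases "snd r") (auto simp: valid_path_Cons)
        then have "x r = h r" using r(2) hg(1,4) I_vanishes_Nil by (cases r) auto
        then show False using x r(2,3) \<open>snd r = []\<close> unfolding radPset_def by (cases r) auto
      qed
    qed
    then show "x \<in> I" using hg by simp
  qed
qed (rule I_subset_radPset)

end

lemma soc_eqI:
  assumes "A \<in> submods Q M" and "simple_mod Q (A, snd M)"
    and "\<And>N. N \<in> submods Q M \<Longrightarrow> simple_mod Q (N, snd M) \<Longrightarrow> N \<subseteq> A"
  shows "soc Q M = (A, snd M)"
proof -
  let ?F = "{S. S \<in> submods Q M \<and> (\<forall>N\<in>submods Q M. simple_mod Q (N, snd M) \<longrightarrow> N \<subseteq> S)}"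
  have "A \<in> ?F" using assms(1,3) by blast
  moreover have "A \<subseteq> S" if "S \<in> ?F" for S using that assms(1,2) by blast
  ultimately have "\<Inter>?F = A" by blast
  then show ?thesis unfolding soc_def by simp
qed


section \<open>A vertex whose projective has length two\<close>

locale length_two_vertex = admissible_ideal Q sig m
  for Q :: "('v,'e) quiver" and sig :: "('v,'e,'k::field) elem set" and m +
  fixes d :: 'v
  assumes d_vert: "d \<in> verts Q"
    and length_Pmod_d: "mod_length Q (Pmod Q (ideal_gen Q sig) d) = 2"
begin

lemma vanishing_at_idem_and_arrow_in_I:
  assumes "a \<in> arrs Q" "src Q a = d" "h \<in> Pset d" "h (d, []) = 0" "h (d, [a]) = 0"
  shows "h \<in> I"
proof (rule ccontr)
  assume "h \<notin> I"
  moreover have "h \<in> radPset_avoiding d a"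
    using assms(3-5) by (simp add: radPset_avoiding_def radPset_def)
  ultimately have "has_chain Q (Pmod Q I d) 3" using has_chain_Pmod_3 assms(1,2) by blast
  then show False using mod_length_Pmod(2)[OF d_vert] length_Pmod_d by fastforce
qed

lemma arrow_from_d_exists: "\<exists>a\<in>arrs Q. src Q a = d"
proof (rule ccontr)
  assume "\<not> (\<exists>a\<in>arrs Q. src Q a = d)"
  then have rad: "radPset d = I" using radPset_eq_I_if_sink by blast
  obtain T where T: "ideal_chain d 2 T"
    using mod_length_Pmod(1)[OF d_vert] has_chain_Pmod_iff[OF d_vert] length_Pmod_d by auto
  then have T1: "left_ideal Q (T 1)" "I \<subseteq> T 1" "T 1 \<subseteq> Pset d" "T 1 \<noteq> Pset d" "I \<noteq> T 1"
    unfolding ideal_chain_def by (auto simp: numeral_2_eq_2)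
  then show False using proper_left_ideal_subset_radPset[OF d_vert T1(1-4)] rad by blast
qed

definition alpha :: 'e where
  "alpha = (SOME a. a \<in> arrs Q \<and> src Q a = d)"

lemma alpha: "alpha \<in> arrs Q" "src Q alpha = d"
  using someI_ex[OF arrow_from_d_exists[unfolded Bex_def]] unfolding alpha_def by blast+

lemma alpha_unique:
  assumes "a \<in> arrs Q" and "src Q a = d" shows "a = alpha"
proof (rule ccontr)
  assume "a \<noteq> alpha"
  then have "arr Q alpha \<in> I"
    using arr_in_Pset[OF alpha(1)] alpha(2)
    by (intro vanishing_at_idem_and_arrow_in_I[OF assms]) (simp_all add: arr_def pbasis_apply)
  then show False using arr_notin_I by blast
qed

lemma arr_mult_alpha_in_I:
  assumes b: "b \<in> arrs Q"
  shows "pmult Q (arr Q b) (arr Q alpha) \<in> I"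
proof (cases "src Q b = tgt Q alpha")
  case True
  have v: "valid_path Q (d, [alpha, b])"
    using alpha b True d_vert arrow_ends by (simp add: valid_path_Cons)
  then have "pmult Q (arr Q b) (arr Q alpha) = (pbasis (d, [alpha, b]) :: ('v,'e,'k) elem)"
    unfolding arr_def pmult_pbasis using True alpha by simp
  moreover have "pbasis (d, [alpha, b]) \<in> I"
    using alpha v by (intro vanishing_at_idem_and_arrow_in_I[of alpha])
      (simp_all add: pbasis_apply supp_starts_at_in_Pset pbasis_kH supp_starts_at_def)
  ultimately show ?thesis by simp
next
  case False
  then have "pmult Q (arr Q b) (arr Q alpha) = (pzero :: ('v,'e,'k) elem)"
    unfolding arr_def pmult_pbasis by simp
  then show ?thesis using ideal_gen.zero by simp
qed

lemma Pset_decompE: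
  assumes x: "x \<in> Pset d"
  obtains i where "i \<in> I"
    and "x = padd (padd (smul (x (d, [])) (idem d)) (smul (x (d, [alpha])) (arr Q alpha))) i"
proof -
  let ?s = "padd (smul (x (d, [])) (idem d)) (smul (x (d, [alpha])) (arr Q alpha))"
  have "psub x ?s \<in> I"
  proof (rule vanishing_at_idem_and_arrow_in_I[OF alpha])
    show "psub x ?s \<in> Pset d"
      using x idem_in_Pset[OF d_vert] arr_in_Pset[OF alpha(1)] alpha(2) left_ideal_Pset
      by (simp add: left_ideal_psub left_ideal_padd left_ideal_smul)
  qed (use alpha(2) in \<open>simp_all add: idem_def arr_def pbasis_apply\<close>)
  moreover have "x = padd ?s (psub x ?s)" by (rule ext) simp
  ultimately show ?thesis using that by blast
qed

lemma radPset_decompE: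
  assumes "x \<in> radPset d"
  obtains i where "i \<in> I" and "x = padd (smul (x (d, [alpha])) (arr Q alpha)) i"
proof -
  obtain i where "i \<in> I"
    and "x = padd (padd (smul (x (d, [])) (idem d)) (smul (x (d, [alpha])) (arr Q alpha))) i"
    using assms unfolding radPset_def by (blast elim: Pset_decompE)
  moreover have "x (d, []) = 0" using assms unfolding radPset_def by blast
  ultimately show ?thesis using that by simp
qed

lemma radPset_subset_if_alpha_mem:
  assumes T: "left_ideal Q T" "I \<subseteq> T" and "arr Q alpha \<in> T"
  shows "radPset d \<subseteq> T"
proof
  fix x assume "x \<in> radPset d"
  define c where "c = x (d, [alpha])"
  obtain i where i: "i \<in> I" and x: "x = padd (smul c (arr Q alpha)) i"
    using \<open>x \<in> radPset d\<close> unfolding c_def by (rule radPset_decompE)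
  have "smul c (arr Q alpha) \<in> T" using T(1) assms(3) by (rule left_ideal_smul)
  moreover have "i \<in> T" using T(2) i by blast
  ultimately show "x \<in> T" unfolding x by (rule left_ideal_padd[OF T(1)])
qed

lemma alpha_mem_if_radPset_mem:
  assumes T: "left_ideal Q T" "I \<subseteq> T" and x: "x \<in> T" "x \<in> radPset d" "x \<notin> I"
  shows "arr Q alpha \<in> T"
proof -
  define c where "c = x (d, [alpha])"
  obtain i where i: "i \<in> I" and xi: "x = padd (smul c (arr Q alpha)) i"
    using x(2) unfolding c_def by (rule radPset_decompE)
  have "c \<noteq> 0" using x(3) i unfolding xi by auto
  moreover have "psub x i \<in> T" using T i x(1) by (blast intro: left_ideal_psub)
  moreover have "psub x i = smul c (arr Q alpha)" unfolding xi by (rule ext) simp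
  ultimately show ?thesis using left_ideal_smul_cancel[OF T(1)] by metis
qed

lemma alpha_mult_Pset:
  assumes x: "x \<in> Pset d"
  obtains i where "i \<in> I" and "pmult Q (arr Q alpha) x = padd (smul (x (d, [])) (arr Q alpha)) i"
proof -
  let ?a = "arr Q alpha"
  define c0 c1 where "c0 = x (d, [])" and "c1 = x (d, [alpha])"
  obtain i where i: "i \<in> I" and xi: "x = padd (padd (smul c0 (idem d)) (smul c1 ?a)) i"
    using x unfolding c0_def c1_def by (rule Pset_decompE)
  have ae: "pmult Q ?a (idem d) = ?a"
    unfolding arr_def idem_def pmult_pbasis using alpha d_vert arrow_ends by (simp add: valid_path_Cons)
  have "pmult Q ?a x = padd (padd (smul c0 ?a) (smul c1 (pmult Q ?a ?a))) (pmult Q ?a i)"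
    by (subst xi) (simp only: pmult_padd_right pmult_smul_right ae)
  also have "\<dots> = padd (smul c0 ?a) (padd (smul c1 (pmult Q ?a ?a)) (pmult Q ?a i))"
    by (rule ext) (simp add: add.assoc)
  finally have "pmult Q ?a x = padd (smul (x (d, [])) ?a) (padd (smul c1 (pmult Q ?a ?a)) (pmult Q ?a i))"
    unfolding c0_def .
  moreover have "padd (smul c1 (pmult Q ?a ?a)) (pmult Q ?a i) \<in> I"
    using arr_mult_alpha_in_I[OF alpha(1)] I_pmult_left[OF i arr_kH[OF alpha(1)]]
    by (intro I_padd ideal_gen_smul[OF sig_kH])
  ultimately show ?thesis using that by blast
qed

lemma simple_radPset: "simple_mod Q (emb ` radPset d, emb ` I)"
  unfolding simple_mod_def fst_conv snd_conv
proof (intro conjI ballI)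
  show "emb ` radPset d \<noteq> emb ` I"
    using arr_in_radPset[OF alpha(1)] alpha(2) arr_notin_I by auto
next
  fix N assume "N \<in> submods Q (emb ` radPset d, emb ` I)"
  then have N: "submod Q N" "emb ` I \<subseteq> N" "N \<subseteq> emb ` radPset d"
    unfolding submods_def by auto
  define T where "T = {x. emb x \<in> N}"
  have NT: "N = emb ` T" using N(3) unfolding T_def by (rule emb_image_preimage)
  have T: "left_ideal Q T" "I \<subseteq> T" "T \<subseteq> radPset d"
    using N unfolding NT by (simp_all add: submod_emb_image_iff)
  show "N = emb ` I \<or> N = emb ` radPset d"
  proof (cases "T \<subseteq> I")
    case True
    then show ?thesis using T(2) NT by auto
  next
    case False
    then obtain x where "x \<in> T" "x \<notin> I" by blast
    then have "arr Q alpha \<in> T" using alpha_mem_if_radPset_mem[OF T(1,2)] T(3) by blast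
    then have "radPset d \<subseteq> T" by (rule radPset_subset_if_alpha_mem[OF T(1,2)])
    then show ?thesis using T(3) NT by auto
  qed
qed

lemma simple_submod_subset_radPset:
  assumes N: "N \<in> submods Q (Pmod Q I d)" and simple: "simple_mod Q (N, emb ` I)"
  shows "N \<subseteq> emb ` radPset d"
proof (rule ccontr)
  assume "\<not> N \<subseteq> emb ` radPset d"
  obtain T where T: "N = emb ` T" "left_ideal Q T" "I \<subseteq> T" "T \<subseteq> Pset d"
    using submods_PmodE[OF d_vert N] by blast
  then obtain x where x: "x \<in> T" "x \<notin> radPset d"
    using \<open>\<not> N \<subseteq> emb ` radPset d\<close> by auto
  define c where "c = x (d, [])"
  have c: "c \<noteq> 0" using x T(4) unfolding radPset_def c_def by blast
  obtain i where i: "i \<in> I" and ax: "pmult Q (arr Q alpha) x = padd (smul c (arr Q alpha)) i"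
    using x(1) T(4) unfolding c_def by (blast elim: alpha_mult_Pset)
  have "psub (pmult Q (arr Q alpha) x) i \<in> T"
    using T x(1) i arr_kH[OF alpha(1)] by (blast intro: left_ideal_psub left_ideal_pmult)
  moreover have "psub (pmult Q (arr Q alpha) x) i = smul c (arr Q alpha)"
    unfolding ax by (rule ext) simp
  ultimately have "arr Q alpha \<in> T" using left_ideal_smul_cancel[OF T(2)] c by metis
  then have "radPset d \<subseteq> T" by (rule radPset_subset_if_alpha_mem[OF T(2,3)])
  then have "emb ` radPset d \<in> submods Q (N, emb ` I)"
    using T left_ideal_radPset I_subset_radPset unfolding submods_def
    by (simp add: submod_emb_image_iff)
  then have "emb ` radPset d = emb ` I \<or> emb ` radPset d = N"
    using simple unfolding simple_mod_def by auto
  then have "radPset d = T" using simple_radPset T(1) unfolding simple_mod_def by auto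
  then show False using x by blast
qed

theorem soc_Pmod: "soc Q (Pmod Q I d) = (emb ` radPset d, emb ` I)"
proof -
  have snd: "snd (Pmod Q I d) = emb ` I" by (simp add: Pmod_eq[OF d_vert])
  have "soc Q (Pmod Q I d) = (emb ` radPset d, snd (Pmod Q I d))"
  proof (rule soc_eqI)
    show "emb ` radPset d \<in> submods Q (Pmod Q I d)"
      by (simp add: emb_image_in_submods_Pmod_iff[OF d_vert] left_ideal_radPset I_subset_radPset
          radPset_subset_Pset)
  qed (use simple_radPset simple_submod_subset_radPset in \<open>simp_all add: snd\<close>)
  then show ?thesis by (simp add: snd)
qed

lemma pmult_alpha_in_radPset:
  assumes z: "z \<in> kH Q" shows "pmult Q z (arr Q alpha) \<in> radPset d"
proof -
  have "supp_starts_at d (pmult Q z (arr Q alpha))"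
    using supp_starts_at_pmult[OF supp_starts_at_arr] alpha(2) by metis
  then have "pmult Q z (arr Q alpha) \<in> Pset d"
    by (rule supp_starts_at_in_Pset[OF pmult_kH[OF z arr_kH[OF alpha(1)]]])
  then show ?thesis unfolding radPset_def by (simp add: pmult_Nil arr_def pbasis_apply)
qed

lemma pmult_alpha_decompE:
  assumes z: "z \<in> kH Q"
  obtains i where "i \<in> I"
    and "pmult Q z (arr Q alpha) = padd (smul (z (tgt Q alpha, [])) (arr Q alpha)) i"
proof -
  have "valid_path Q (d, [alpha])" using valid_path_arr[OF alpha(1)] alpha(2) by simp
  then have "pmult Q z (arr Q alpha) (d, [alpha]) = z (tgt Q alpha, [])"
    using alpha(2) by (simp add: pmult_single_arrow arr_def pbasis_apply)
  then show ?thesis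
    using radPset_decompE[OF pmult_alpha_in_radPset[OF z]] that by metis
qed

lemma idem_tgt_mult_alpha: "pmult Q (idem (tgt Q alpha)) (arr Q alpha) = arr Q alpha"
  unfolding arr_def idem_def pmult_pbasis using valid_path_arr[OF alpha(1)] by simp

lemma pmult_alpha_in_I_iff:
  assumes z: "z \<in> Pset (tgt Q alpha)"
  shows "pmult Q z (arr Q alpha) \<in> I \<longleftrightarrow> z \<in> radPset (tgt Q alpha)"
proof -
  define c where "c = z (tgt Q alpha, [])"
  obtain i where i: "i \<in> I" and za: "pmult Q z (arr Q alpha) = padd (smul c (arr Q alpha)) i"
    using Pset_kH[OF z] unfolding c_def by (rule pmult_alpha_decompE)
  have "pmult Q z (arr Q alpha) \<in> I \<longleftrightarrow> smul c (arr Q alpha) \<in> I"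
  proof
    assume "pmult Q z (arr Q alpha) \<in> I"
    then have "psub (pmult Q z (arr Q alpha)) i \<in> I" using i by (rule I_psub)
    moreover have "psub (pmult Q z (arr Q alpha)) i = smul c (arr Q alpha)"
      unfolding za by (rule ext) simp
    ultimately show "smul c (arr Q alpha) \<in> I" by simp
  qed (simp add: za i I_padd)
  then show ?thesis using z unfolding c_def radPset_def by (simp add: smul_arr_in_I_iff)
qed

lemma radPset_in_I_if_idem_tgt_mult_in_I:
  assumes z: "z \<in> radPset d" and ez: "pmult Q (idem (tgt Q alpha)) z \<in> I"
  shows "z \<in> I"
proof -
  let ?e = "idem (tgt Q alpha) :: ('v,'e,'k) elem" and ?a = "arr Q alpha"
  define c where "c = z (d, [alpha])"
  obtain j where j: "j \<in> I" and zj: "z = padd (smul c ?a) j"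
    using z unfolding c_def by (rule radPset_decompE)
  have "psub (pmult Q ?e z) (pmult Q ?e j) = smul c ?a"
    unfolding zj pmult_padd_right pmult_smul_right idem_tgt_mult_alpha by (rule ext) simp
  moreover have "psub (pmult Q ?e z) (pmult Q ?e j) \<in> I"
    using ez I_pmult_left[OF j idem_kH] arrow_ends alpha(1) by (simp add: I_psub)
  ultimately have "c = 0" using smul_arr_in_I_iff by metis
  then show "z \<in> I" using zj j by simp
qed

text \<open>Right multiplication by \<alpha>_d induces S_(t \<alpha>_d) \<cong> soc P_d.\<close>
lemma Smod_tgt_alpha_iso_soc: "mod_iso Q (Smod Q I (tgt Q alpha)) (soc Q (Pmod Q I d))"
proof -
  let ?y = "tgt Q alpha" and ?a = "arr Q alpha"
  have y: "?y \<in> verts Q" using arrow_ends alpha(1) by blast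
  define \<phi> where "\<phi> x = emb (pmult Q (x 0) ?a)" for x :: "('v,'e,'k) vec"
  have \<phi>: "\<phi> (emb z) = emb (pmult Q z ?a)" for z unfolding \<phi>_def by simp
  show ?thesis
    unfolding mod_iso_def Smod_eq[OF y] soc_Pmod fst_conv snd_conv
  proof (intro exI[of _ \<phi>] conjI ballI)
    fix x assume "x \<in> emb ` Pset ?y"
    then show "\<phi> x \<in> emb ` radPset d"
      using \<phi> pmult_alpha_in_radPset Pset_kH by auto
  next
    fix x z assume "x \<in> emb ` Pset ?y" "z \<in> emb ` Pset ?y"
    then obtain x' z' where xz: "x = emb x'" "z = emb z'" by blast
    have "vsub (\<phi> (vadd (emb x') (emb z'))) (vadd (\<phi> (emb x')) (\<phi> (emb z'))) = emb pzero"
      unfolding vadd_emb \<phi> vsub_emb pmult_padd_left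
      by (rule arg_cong[where f = emb]) (rule ext, simp)
    then show "vsub (\<phi> (vadd x z)) (vadd (\<phi> x) (\<phi> z)) \<in> emb ` I"
      using ideal_gen.zero xz by simp
  next
    fix u :: "('v,'e,'k) elem" and x assume "u \<in> kH Q" "x \<in> emb ` Pset ?y"
    then show "vsub (\<phi> (vact Q u x)) (vact Q u (\<phi> x)) \<in> emb ` I"
      using ideal_gen.zero
      by (auto simp: vact_emb vsub_emb \<phi> pmult_assoc_arr[OF alpha(1)] psub_def pzero_def[symmetric])
  next
    fix x assume "x \<in> emb ` Pset ?y"
    then show "\<phi> x \<in> emb ` I \<longleftrightarrow> x \<in> emb ` radPset ?y"
      using pmult_alpha_in_I_iff \<phi> by auto
  next
    fix v assume "v \<in> emb ` radPset d"
    then obtain z where z: "z \<in> radPset d" "v = emb z" by blast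
    define c where "c = z (d, [alpha])"
    obtain i where i: "i \<in> I" and zi: "z = padd (smul c ?a) i"
      using z(1) unfolding c_def by (rule radPset_decompE)
    have "smul c (idem ?y) \<in> Pset ?y"
      using idem_in_Pset[OF y] left_ideal_Pset by (rule left_ideal_smul[rotated])
    moreover have "vsub v (\<phi> (emb (smul c (idem ?y)))) = emb i"
      unfolding z(2) \<phi> pmult_smul_left idem_tgt_mult_alpha vsub_emb zi
      by (rule arg_cong[where f = emb]) (rule ext, simp)
    ultimately show "\<exists>x\<in>emb ` Pset ?y. vsub v (\<phi> x) \<in> emb ` I" using i by auto
  qed
qed

text \<open>The idempotent e_(t \<alpha>_d) acts non-trivially on soc P_d but annihilates S_y
  for y \<noteq> t \<alpha>_d.\<close>
lemma tgt_alpha_if_Smod_iso_soc: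
  assumes y: "y \<in> verts Q" and iso: "mod_iso Q (Smod Q I y) (soc Q (Pmod Q I d))"
  shows "y = tgt Q alpha"
proof (rule ccontr)
  assume ne: "y \<noteq> tgt Q alpha"
  let ?e = "idem (tgt Q alpha) :: ('v,'e,'k) elem"
  obtain \<phi> where \<phi>: "(\<forall>x\<in>emb ` Pset y. \<phi> x \<in> emb ` radPset d)
      \<and> (\<forall>x\<in>emb ` Pset y. \<forall>z\<in>emb ` Pset y. vsub (\<phi> (vadd x z)) (vadd (\<phi> x) (\<phi> z)) \<in> emb ` I)
      \<and> (\<forall>u\<in>kH Q. \<forall>x\<in>emb ` Pset y. vsub (\<phi> (vact Q u x)) (vact Q u (\<phi> x)) \<in> emb ` I)
      \<and> (\<forall>x\<in>emb ` Pset y. \<phi> x \<in> emb ` I \<longleftrightarrow> x \<in> emb ` radPset y)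
      \<and> (\<forall>v\<in>emb ` radPset d. \<exists>x\<in>emb ` Pset y. vsub v (\<phi> x) \<in> emb ` I)"
    using iso unfolding mod_iso_def Smod_eq[OF y] soc_Pmod fst_conv snd_conv by (rule exE)
  note maps = conjunct1[OF \<phi>] and act = conjunct1[OF conjunct2[OF conjunct2[OF \<phi>]]]
    and ker = conjunct1[OF conjunct2[OF conjunct2[OF conjunct2[OF \<phi>]]]]
  have ey: "emb (idem y) \<in> emb ` Pset y" using idem_in_Pset[OF y] by simp
  obtain z where z: "\<phi> (emb (idem y)) = emb z" "z \<in> radPset d" using maps ey by blast
  have zero: "emb pzero \<in> emb ` Pset y" using left_ideal_pzero[OF left_ideal_Pset] by simp
  obtain w where w: "\<phi> (emb pzero) = emb w" using maps zero by blast
  have "vsub (\<phi> (vact Q pzero (emb (idem y)))) (vact Q pzero (\<phi> (emb (idem y)))) \<in> emb ` I"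
    using act ey pzero_kH by blast
  then have "emb (psub w pzero) \<in> emb ` I"
    unfolding vact_emb pmult_pzero_left w z(1) vsub_emb .
  moreover have "psub w pzero = w" by (rule ext) simp
  ultimately have wI: "w \<in> I" by simp
  have e0: "pmult Q ?e (idem y) = pzero" unfolding idem_def pmult_pbasis using ne by simp
  have "vsub (\<phi> (vact Q ?e (emb (idem y)))) (vact Q ?e (\<phi> (emb (idem y)))) \<in> emb ` I"
    using act idem_kH arrow_ends alpha(1) ey by blast
  then have "emb (psub w (pmult Q ?e z)) \<in> emb ` I"
    unfolding vact_emb e0 w z(1) vsub_emb .
  then have "psub w (psub w (pmult Q ?e z)) \<in> I" using wI I_psub by simp
  moreover have "psub w (psub w (pmult Q ?e z)) = pmult Q ?e z" by (rule ext) simp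
  ultimately have "pmult Q ?e z \<in> I" by simp
  then have "\<phi> (emb (idem y)) \<in> emb ` I"
    using radPset_in_I_if_idem_tgt_mult_in_I[OF z(2)] z(1) by simp
  then have "idem y \<in> radPset y" using ker ey by simp
  then show False using idem_notin_radPset by blast
qed

lemma rho_eq: "rho Q I d = tgt Q alpha"
  unfolding rho_def
proof (rule the_equality)
  show "tgt Q alpha \<in> verts Q \<and> mod_iso Q (Smod Q I (tgt Q alpha)) (soc Q (Pmod Q I d))"
    using arrow_ends alpha(1) Smod_tgt_alpha_iso_soc by blast
qed (use tgt_alpha_if_Smod_iso_soc in blast)

end


theorem lemma3p3:
  fixes Q :: "('v,'e) quiver" and sig :: "('v,'e,'k::field) elem set" and m :: nat and d :: 'v
  assumes "finite (verts Q)" and "finite (arrs Q)"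
    and "\<forall>a\<in>arrs Q. src Q a \<in> verts Q \<and> tgt Q a \<in> verts Q"
    and "sig \<subseteq> kH Q" and "m \<ge> 1"
    and "ideal_pow Q (arrow_ideal Q) m \<subseteq> ideal_gen Q sig"
    and "ideal_gen Q sig \<subseteq> ideal_pow Q (arrow_ideal Q) 2"
    and "fin_dim_quot Q (ideal_gen Q sig)"
    and "condF Q (ideal_gen Q sig)"
    and "d \<in> Dset Q (ideal_gen Q sig)"
  shows "\<exists>\<alpha>. \<alpha> \<in> arrs Q \<and> src Q \<alpha> = d
           \<and> (\<forall>\<alpha>'. \<alpha>' \<in> arrs Q \<and> src Q \<alpha>' = d \<longrightarrow> \<alpha>' = \<alpha>)
           \<and> tgt Q \<alpha> = rho Q (ideal_gen Q sig) d
           \<and> (\<forall>\<beta>\<in>arrs Q. src Q \<beta> = rho Q (ideal_gen Q sig) d \<longrightarrow>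
                pmult Q (arr Q \<beta>) (arr Q \<alpha>) \<in> ideal_gen Q sig)"
proof -
  have "d \<in> verts Q" and "mod_length Q (Pmod Q (ideal_gen Q sig) d) = 2"
    using assms(10) unfolding Dset_def by auto
  then interpret length_two_vertex Q sig m d
    using assms(1-7) by unfold_locales simp_all
  show ?thesis
  proof (intro exI[of _ alpha] conjI allI impI ballI)
    show "alpha \<in> arrs Q" and "src Q alpha = d" by (fact alpha)+
    show "tgt Q alpha = rho Q (ideal_gen Q sig) d" by (simp add: rho_eq)
  next
    fix a assume "a \<in> arrs Q \<and> src Q a = d"
    then show "a = alpha" using alpha_unique by blast
  next
    fix b assume "b \<in> arrs Q"
    then show "pmult Q (arr Q b) (arr Q alpha) \<in> ideal_gen Q sig" by (rule arr_mult_alpha_in_I)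
  qed
qed

end
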